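(* Let $\mathbf{P}$ be the convex hull of $\{\chi_\mu : \mu \text{ is a non-uniformly stable matching in } G\}$ and let $\mathbf{S}$ be the set of vectors $x\in\mathbb{R}_+^E$ satisfying (1) $x(E(v))\le 1$ for all $v\in V$; (2) $x(e)+\sum_{v\in e}x(E[\succ_v e])\ge 1$ for all $e\in E_1$; (3) $x(E[\sim_v e])+\sum_{w\in e}x(E[\succ_w e])\ge 1$ for all $e\in E_2$ and all $v\in e$. Then $\mathbf{P}=\mathbf{S}$.
   Context: Setting: $G=(V,E)$ is a finite simple bipartite graph with $V=V_1\sqcup V_2$, every edge joining a vertex of $V_1$ to a vertex of $V_2$; an edge is identified with the set of its two endpoints. $E$ is partitioned into $E_1,E_2$ ($E_1\cap E_2=\emptyset$, $E_1\cup E_2=E$). For $F\subseteq E$ and $v\in V$, $F(v)$ is the set of edges of $F$ incident to $v$. For every $v\in V$ there is a transitive and complete binary relation $\succsim_v$ on $E(v)\cup\{\emptyset\}$ with $e\succsim_v\emptyset$ and $\emptyset\not\succsim_v e$ for all $e\in E(v)$; $e\succ_v f$ means $e\succsim_v f$ and $f\not\succsim_v e$; $e\sim_v f$ means both $e\succsim_v f$ and $f\succsim_v e$. A matching is $\mu\subseteq E$ with $|\mu(v)|\le1$ for all $v$; $\mu(v)$ denotes the unique edge of $\mu$ at $v$, or $\emptyset$ if none. An edge $e\in E\setminus\mu$ weakly blocks $\mu$ if $e\succsim_v\mu(v)$ for every $v\in e$; it strongly blocks $\mu$ if additionally $e\succ_w\mu(w)$ for some $w\in e$. A matching $\mu$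 is non-uniformly stable if no edge of $E_1\setminus\mu$ weakly blocks $\mu$ and no edge of $E_2\setminus\mu$ strongly blocks $\mu$. For $x\in\mathbb{R}_+^E$ and $F\subseteq E$, $x(F)=\sum_{e\in F}x(e)$; $\chi_F\in\{0,1\}^E$ is the characteristic vector of $F$. For $v\in V$ and $e\in E(v)$: $E[\succ_v e]=\{f\in E(v): f\succ_v e\}$ and $E[\sim_v e]=\{f\in E(v): f\sim_v e\}$. *)

theory Defs
  imports "HOL-Analysis.Analysis"
begin

(* Edges are 2-element vertex sets ('v set); the "empty edge" \<emptyset> is the empty set {}.
   Preferences: pref v e f means  e \<succeq>_v f. *)

definition inc :: "'v set set \<Rightarrow> 'v \<Rightarrow> 'v set set" where
  "inc F v = {e \<in> F. v \<in> e}"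

definition strict_pref :: "('v \<Rightarrow> 'v set \<Rightarrow> 'v set \<Rightarrow> bool) \<Rightarrow> 'v \<Rightarrow> 'v set \<Rightarrow> 'v set \<Rightarrow> bool" where
  "strict_pref pref v e f \<longleftrightarrow> pref v e f \<and> \<not> pref v f e"

definition indiff :: "('v \<Rightarrow> 'v set \<Rightarrow> 'v set \<Rightarrow> bool) \<Rightarrow> 'v \<Rightarrow> 'v set \<Rightarrow> 'v set \<Rightarrow> bool" where
  "indiff pref v e f \<longleftrightarrow> pref v e f \<and> pref v f e"

definition better :: "'v set set \<Rightarrow> ('v \<Rightarrow> 'v set \<Rightarrow> 'v set \<Rightarrow> bool) \<Rightarrow> 'v \<Rightarrow> 'v set \<Rightarrow> 'v set set" where
  "better E pref v e = {f \<in> inc E v. strict_pref pref v f e}"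

definition equiv_edges :: "'v set set \<Rightarrow> ('v \<Rightarrow> 'v set \<Rightarrow> 'v set \<Rightarrow> bool) \<Rightarrow> 'v \<Rightarrow> 'v set \<Rightarrow> 'v set set" where
  "equiv_edges E pref v e = {f \<in> inc E v. indiff pref v f e}"

definition setting ::
  "'v set \<Rightarrow> 'v set \<Rightarrow> 'v set set \<Rightarrow> 'v set set \<Rightarrow> 'v set set \<Rightarrow> ('v \<Rightarrow> 'v set \<Rightarrow> 'v set \<Rightarrow> bool) \<Rightarrow> bool" where
  "setting V1 V2 E E1 E2 pref \<longleftrightarrow>
     finite (V1 \<union> V2) \<and> V1 \<inter> V2 = {} \<and>
     (\<forall>e\<in>E. \<exists>a b. a \<in> V1 \<and> b \<in> V2 \<and> e = {a, b}) \<and>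
     E1 \<inter> E2 = {} \<and> E1 \<union> E2 = E \<and>
     (\<forall>v \<in> V1 \<union> V2.
        (\<forall>e\<in>insert {} (inc E v). \<forall>f\<in>insert {} (inc E v). \<forall>g\<in>insert {} (inc E v).
            pref v e f \<longrightarrow> pref v f g \<longrightarrow> pref v e g) \<and>
        (\<forall>e\<in>insert {} (inc E v). \<forall>f\<in>insert {} (inc E v). pref v e f \<or> pref v f e) \<and>
        (\<forall>e\<in>inc E v. pref v e {} \<and> \<not> pref v {} e))"

definition matching :: "'v set set \<Rightarrow> 'v set set \<Rightarrow> bool" where
  "matching E M \<longleftrightarrow> M \<subseteq> E \<and> (\<forall>v. card (inc M v) \<le> 1)"

definition medge :: "'v set set \<Rightarrow> 'v \<Rightarrow> 'v set" where
  "medge M v = (if \<exists>e\<in>M. v \<in> e then (THE e. e \<in> M \<and> v \<in> e) else {})"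

definition weakly_blocks :: "('v \<Rightarrow> 'v set \<Rightarrow> 'v set \<Rightarrow> bool) \<Rightarrow> 'v set set \<Rightarrow> 'v set \<Rightarrow> bool" where
  "weakly_blocks pref M e \<longleftrightarrow> e \<notin> M \<and> (\<forall>v\<in>e. pref v e (medge M v))"

definition strongly_blocks :: "('v \<Rightarrow> 'v set \<Rightarrow> 'v set \<Rightarrow> bool) \<Rightarrow> 'v set set \<Rightarrow> 'v set \<Rightarrow> bool" where
  "strongly_blocks pref M e \<longleftrightarrow> weakly_blocks pref M e \<and> (\<exists>w\<in>e. strict_pref pref w e (medge M w))"

definition nu_stable ::
  "'v set set \<Rightarrow> 'v set set \<Rightarrow> 'v set set \<Rightarrow> ('v \<Rightarrow> 'v set \<Rightarrow> 'v set \<Rightarrow> bool) \<Rightarrow> 'v set set \<Rightarrow> bool" where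
  "nu_stable E E1 E2 pref M \<longleftrightarrow> matching E M \<and>
     (\<forall>e \<in> E1 - M. \<not> weakly_blocks pref M e) \<and>
     (\<forall>e \<in> E2 - M. \<not> strongly_blocks pref M e)"

(* Vectors in R^E are functions 'v set \<Rightarrow> real vanishing outside E.
   Convex hull of a set A of such vectors, written out explicitly (finite convex combinations). *)
definition conv_hull :: "('a \<Rightarrow> real) set \<Rightarrow> ('a \<Rightarrow> real) set" where
  "conv_hull A = {x. \<exists>S u. finite S \<and> S \<subseteq> A \<and> (\<forall>s\<in>S. 0 \<le> u s) \<and> sum u S = 1 \<and>
                        x = (\<lambda>e. \<Sum>s\<in>S. u s * s e)}"

definition char_vec :: "'a set \<Rightarrow> 'a \<Rightarrow> real" where
  "char_vec F = (\<lambda>e. if e \<in> F then 1 else 0)"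

end

(*
  The inclusion P \<subseteq> S is direct: a non-uniformly stable matching satisfies every constraint of S,
  and S is convex.

  For S \<subseteq> P take x \<in> S and induct on the size of its support.  Weighting the covering constraints
  (3) by x and summing gives \<Sum>\<^sub>v (x(E(v))\<^sup>2 - x(E(v))), which is \<le> 0 although every summand is
  \<ge> 0; so complementary slackness holds: every vertex is fully covered or not at all, and every
  positive edge makes its covering constraints tight.
  If some nonzero perturbation d, supported on positive edges of E2 and summing to zero on every
  tie class, exists, then x \<plusminus> t d stay in S and x is a convex combination of two points of S of
  smaller support.  Otherwise every positive edge is the only positive edge of its tie classes
  (two positive tied edges would start a bipartite multigraph of minimum degree 2 whose
  incidence kernel gives such a d).  Then the positive edges that are a first choice of their
  V1-endpoint form a non-uniformly stable matching M, and x = \<lambda> \<chi>\<^sub>M + (1 - \<lambda>) y with y \<in> S of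
  smaller support, \<lambda> being the least weight of x on M.
*)
theory Submission
  imports Defs
begin

lemma mem_inc_iff: "f \<in> inc F v \<longleftrightarrow> f \<in> F \<and> v \<in> f"
  by (simp add: inc_def)

lemma inc_subset: "inc F v \<subseteq> F"
  by (auto simp: inc_def)

lemma sum_char_vec: "finite F \<Longrightarrow> sum (char_vec M) F = card (F \<inter> M)"
  using sum.inter_restrict[of F "\<lambda>_. 1::real" M] by (simp add: char_vec_def)

lemma conv_hull_superset: "a \<in> A \<Longrightarrow> a \<in> conv_hull A"
  unfolding conv_hull_def by (rule CollectI, rule exI[of _ "{a}"], rule exI[of _ "\<lambda>_. 1"]) auto

lemma conv_hull_convex_comb:
  assumes y: "y \<in> conv_hull A" and z: "z \<in> conv_hull A" and "0 \<le> \<mu>" "\<mu> \<le> 1"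
  shows "(\<lambda>e. \<mu> * y e + (1 - \<mu>) * z e) \<in> conv_hull A"
proof -
  obtain Sy uy where Y: "finite Sy" "Sy \<subseteq> A" "\<forall>s\<in>Sy. 0 \<le> uy s" "sum uy Sy = 1"
    "y = (\<lambda>e. \<Sum>s\<in>Sy. uy s * s e)"
    using y unfolding conv_hull_def by blast
  obtain Sz uz where Z: "finite Sz" "Sz \<subseteq> A" "\<forall>s\<in>Sz. 0 \<le> uz s" "sum uz Sz = 1"
    "z = (\<lambda>e. \<Sum>s\<in>Sz. uz s * s e)"
    using z unfolding conv_hull_def by blast
  define U where "U = Sy \<union> Sz"
  define u where
    "u s = \<mu> * (if s \<in> Sy then uy s else 0) + (1 - \<mu>) * (if s \<in> Sz then uz s else 0)" for s
  have finU: "finite U" using Y Z U_def by auto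
  have restrict_y: "(\<Sum>s\<in>U. if s \<in> Sy then f s else 0) = sum f Sy" for f :: "_ \<Rightarrow> real"
    using sum.inter_restrict[OF finU, of f Sy] U_def by (simp add: Int_absorb1)
  have restrict_z: "(\<Sum>s\<in>U. if s \<in> Sz then f s else 0) = sum f Sz" for f :: "_ \<Rightarrow> real"
    using sum.inter_restrict[OF finU, of f Sz] U_def by (simp add: Int_absorb1 Int_commute)
  have "sum u U = 1"
    using Y Z unfolding u_def sum.distrib sum_distrib_left[symmetric] restrict_y restrict_z by simp
  moreover have "\<mu> * y e + (1 - \<mu>) * z e = (\<Sum>s\<in>U. u s * s e)" for e
  proof -
    have "(\<Sum>s\<in>U. u s * s e) = (\<Sum>s\<in>U. \<mu> * (if s \<in> Sy then uy s * s e else 0)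
                                     + (1 - \<mu>) * (if s \<in> Sz then uz s * s e else 0))"
      by (rule sum.cong) (auto simp: u_def algebra_simps)
    thus ?thesis
      unfolding sum.distrib sum_distrib_left[symmetric] restrict_y restrict_z using Y Z by simp
  qed
  moreover have "\<forall>s\<in>U. 0 \<le> u s"
    using Y Z assms(3,4) by (auto simp: u_def U_def)
  ultimately show ?thesis
    unfolding conv_hull_def using finU Y(2) Z(2)
    by (intro CollectI exI[of _ U] exI[of _ u] conjI ext) (auto simp: U_def)
qed

lemma char_vec_sum_nonneg: "0 \<le> sum (char_vec M) F"
  by (intro sum_nonneg) (simp add: char_vec_def)

lemma char_vec_sum_ge_one: "finite F \<Longrightarrow> f \<in> F \<Longrightarrow> f \<in> M \<Longrightarrow> 1 \<le> sum (char_vec M) F"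
proof -
  assume "finite F" "f \<in> F" "f \<in> M"
  hence "0 < card (F \<inter> M)" by (auto simp: card_gt_0_iff)
  thus ?thesis using \<open>finite F\<close> by (simp add: sum_char_vec)
qed

lemma medge_eqI:
  assumes "finite M" "card (inc M v) \<le> 1" "f \<in> M" "v \<in> f"
  shows "medge M v = f"
proof -
  have "g = f" if "g \<in> M" "v \<in> g" for g
  proof -
    have "card {f, g} \<le> card (inc M v)"
      using assms that by (intro card_mono finite_subset[OF inc_subset]) (simp_all add: mem_inc_iff)
    hence "card {f, g} \<le> 1" using assms(2) by linarith
    thus ?thesis by (cases "g = f") auto
  qed
  hence "(THE e. e \<in> M \<and> v \<in> e) = f" using assms(3,4) by (intro the_equality) blast+
  thus ?thesis using assms(3,4) by (auto simp: medge_def)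
qed

lemma medge_cases:
  assumes "finite M" "card (inc M v) \<le> 1"
  shows "medge M v = {} \<or> medge M v \<in> M \<and> v \<in> medge M v"
proof (cases "\<exists>e\<in>M. v \<in> e")
  case True
  then obtain f where "f \<in> M" "v \<in> f" by blast
  thus ?thesis using medge_eqI[OF assms] by simp
next
  case False
  thus ?thesis by (simp add: medge_def)
qed

lemma finite_strict_order_has_minimal:
  assumes "finite A" "P \<subseteq> A" "P \<noteq> {}"
    and trans: "\<And>e f g. e \<in> A \<Longrightarrow> f \<in> A \<Longrightarrow> g \<in> A \<Longrightarrow> R e f \<Longrightarrow> R f g \<Longrightarrow> R e g"
    and irrefl: "\<And>e. e \<in> A \<Longrightarrow> \<not> R e e"
  obtains e where "e \<in> P" "\<And>f. f \<in> A \<Longrightarrow> R f e \<Longrightarrow> f \<notin> P"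
proof -
  define r where "r = {(f, e). f \<in> A \<and> e \<in> A \<and> R f e}"
  have "trans r" using trans by (auto simp: r_def intro: transI)
  hence "acyclic r" unfolding acyclic_def trancl_id[OF \<open>trans r\<close>] using irrefl by (auto simp: r_def)
  moreover have "finite r" using finite_subset[of r "A \<times> A"] assms(1) by (auto simp: r_def)
  ultimately have "wf r" by (simp add: finite_acyclic_wf)
  obtain p where "p \<in> P" using assms(3) by blast
  with \<open>wf r\<close> obtain e where e: "e \<in> P" "\<And>f. (f, e) \<in> r \<Longrightarrow> f \<notin> P"
    by (rule wfE_min) blast
  show thesis
  proof (rule that[OF e(1)])
    fix f assume "f \<in> A" "R f e"
    thus "f \<notin> P" using e assms(2) by (auto simp: r_def)
  qed
qed

section \<open>Kernels of incidence matrices\<close>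

lemma homogeneous_system_nontrivial_solution:
  fixes c :: "'j \<Rightarrow> 'a \<Rightarrow> real"
  assumes "finite J" "finite X" "card J < card X"
  shows "\<exists>d. (\<forall>y. y \<notin> X \<longrightarrow> d y = 0) \<and> (\<exists>y\<in>X. d y \<noteq> 0) \<and> (\<forall>j\<in>J. (\<Sum>y\<in>X. c j y * d y) = 0)"
  using assms
proof (induction J arbitrary: X c rule: finite_induct)
  case empty
  then obtain y where "y \<in> X" by fastforce
  thus ?case by (intro exI[of _ "\<lambda>z. if z = y then 1 else 0"]) auto
next
  case (insert j J)
  show ?case
  proof (cases "\<forall>y\<in>X. c j y = 0")
    case True
    with insert show ?thesis by fastforce
  next
    case False
    then obtain z where z: "z \<in> X" "c j z \<noteq> 0" by auto
    define X' where "X' = X - {z}"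
    \<comment> \<open>eliminate the unknown at \<open>z\<close> using equation \<open>j\<close>\<close>
    define c' where "c' i y = c i y - c i z * c j y / c j z" for i y
    have "card J < card X'"
      using insert.prems insert.hyps z unfolding X'_def by (simp add: card_Diff_singleton)
    then obtain d' where d': "\<forall>y. y \<notin> X' \<longrightarrow> d' y = 0" "\<exists>y\<in>X'. d' y \<noteq> 0"
      "\<forall>i\<in>J. (\<Sum>y\<in>X'. c' i y * d' y) = 0"
      using insert.IH[of X' c'] insert.prems unfolding X'_def by auto
    define dz where "dz = - (\<Sum>y\<in>X'. c j y * d' y) / c j z"
    define d where "d y = (if y = z then dz else d' y)" for y
    have split: "(\<Sum>y\<in>X. g y * d y) = g z * dz + (\<Sum>y\<in>X'. g y * d' y)" for g
      using z insert.prems unfolding X'_def d_def by (simp add: sum.remove)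
    have "(\<Sum>y\<in>X. c i y * d y) = 0" if "i \<in> J" for i
    proof -
      have "0 = (\<Sum>y\<in>X'. c' i y * d' y)" using d' that by auto
      also have "\<dots> = (\<Sum>y\<in>X'. c i y * d' y) - c i z / c j z * (\<Sum>y\<in>X'. c j y * d' y)"
        unfolding c'_def by (simp add: algebra_simps sum_subtractf sum_distrib_left)
      also have "\<dots> = (\<Sum>y\<in>X. c i y * d y)"
        unfolding split dz_def using z by (simp add: field_simps)
      finally show ?thesis by simp
    qed
    moreover have "(\<Sum>y\<in>X. c j y * d y) = 0"
      unfolding split dz_def using z by simp
    moreover have "\<forall>y. y \<notin> X \<longrightarrow> d y = 0" "\<exists>y\<in>X. d y \<noteq> 0"
      using d' z by (auto simp: d_def X'_def)
    ultimately show ?thesis by auto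
  qed
qed

lemma bipartite_incidence_card_le:
  fixes I :: "'n \<Rightarrow> 'e \<Rightarrow> bool"
  assumes finN: "finite N" and finY: "finite Y"
    and ends: "\<And>y. y \<in> Y \<Longrightarrow> card {n \<in> N. I n y} = 2"
    and deg: "\<And>n. n \<in> N \<Longrightarrow> 2 \<le> card {y \<in> Y. I n y}"
  shows "card N \<le> card Y"
proof -
  have "(\<Sum>n\<in>N. 2::real) \<le> (\<Sum>n\<in>N. \<Sum>y | y \<in> Y \<and> I n y. 1)"
    using deg by (intro sum_mono) simp
  also have "\<dots> = (\<Sum>y\<in>Y. \<Sum>n | n \<in> N \<and> I n y. 1)" by (rule sum.swap_restrict[OF finN finY])
  also have "\<dots> = (\<Sum>y\<in>Y. 2)" using ends by (intro sum.cong) simp_all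
  finally show ?thesis by simp
qed

lemma bipartite_signed_incidence_sum:
  fixes I :: "'n \<Rightarrow> 'e \<Rightarrow> bool" and side :: "'n \<Rightarrow> bool"
  assumes finN: "finite N" and finY: "finite Y"
    and ends: "\<And>y. y \<in> Y \<Longrightarrow> \<exists>a b. side a \<and> \<not> side b \<and> {n \<in> N. I n y} = {a, b}"
  shows "(\<Sum>n\<in>N. (if side n then 1 else -1) * (\<Sum>y | y \<in> Y \<and> I n y. d y)) = (0::real)"
proof -
  let ?\<sigma> = "\<lambda>n. if side n then 1 else - 1 :: real"
  have "(\<Sum>n\<in>N. ?\<sigma> n * (\<Sum>y | y \<in> Y \<and> I n y. d y)) = (\<Sum>n\<in>N. \<Sum>y | y \<in> Y \<and> I n y. ?\<sigma> n * d y)"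
    by (simp add: sum_distrib_left)
  also have "\<dots> = (\<Sum>y\<in>Y. \<Sum>n | n \<in> N \<and> I n y. ?\<sigma> n * d y)"
    by (rule sum.swap_restrict[OF finN finY])
  also have "\<dots> = 0"
  proof (rule sum.neutral, rule ballI)
    fix y assume "y \<in> Y"
    then obtain a b where ab: "side a" "\<not> side b" "{n \<in> N. I n y} = {a, b}" using ends by blast
    hence "a \<noteq> b" by blast
    with ab show "(\<Sum>n | n \<in> N \<and> I n y. ?\<sigma> n * d y) = 0" by simp
  qed
  finally show ?thesis .
qed

text \<open>The incidence matrix of a bipartite multigraph of minimum degree \<open>2\<close> has a nontrivial
  kernel: drop one vertex equation, solve the rest (at most as many equations as edges), and the
  dropped equation follows because the signed sum of all vertex equations vanishes.\<close>

lemma bipartite_incidence_nontrivial_kernel: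
  fixes I :: "'n \<Rightarrow> 'e \<Rightarrow> bool" and side :: "'n \<Rightarrow> bool"
  assumes finN: "finite N" and finY: "finite Y" and "Y \<noteq> {}"
    and ends: "\<And>y. y \<in> Y \<Longrightarrow> \<exists>a b. side a \<and> \<not> side b \<and> {n \<in> N. I n y} = {a, b}"
    and deg: "\<And>n. n \<in> N \<Longrightarrow> 2 \<le> card {y \<in> Y. I n y}"
  shows "\<exists>d. (\<forall>y. y \<notin> Y \<longrightarrow> d y = 0) \<and> (\<exists>y\<in>Y. d y \<noteq> 0) \<and>
             (\<forall>n\<in>N. (\<Sum>y | y \<in> Y \<and> I n y. d y) = (0::real))"
proof -
  have two_ends: "card {n \<in> N. I n y} = 2" if y: "y \<in> Y" for y
  proof -
    obtain a b where "side a" "\<not> side b" "{n \<in> N. I n y} = {a, b}" using ends[OF y] by blast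
    moreover from this have "a \<noteq> b" by blast
    ultimately show ?thesis by simp
  qed
  obtain y0 where "y0 \<in> Y" using \<open>Y \<noteq> {}\<close> by blast
  then obtain n0 b where "{n \<in> N. I n y0} = {n0, b}" using ends by blast
  hence n0: "n0 \<in> N" by blast
  have "card (N - {n0}) < card Y"
    using bipartite_incidence_card_le[OF finN finY two_ends deg] card_Diff1_less[OF finN n0]
    by linarith
  then obtain d :: "'e \<Rightarrow> real" where d: "\<forall>y. y \<notin> Y \<longrightarrow> d y = 0" "\<exists>y\<in>Y. d y \<noteq> 0"
    "\<forall>n\<in>N - {n0}. (\<Sum>y\<in>Y. (if I n y then 1 else 0) * d y) = 0"
    using homogeneous_system_nontrivial_solution[of "N - {n0}" Y "\<lambda>n y. if I n y then 1 else 0"]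
      finN finY
    by blast
  define S where "S n = (\<Sum>y | y \<in> Y \<and> I n y. d y)" for n
  have S_others: "S n = 0" if "n \<in> N - {n0}" for n
  proof -
    have "S n = (\<Sum>y\<in>Y. (if I n y then 1 else 0) * d y)"
      unfolding S_def sum.inter_filter[OF finY] by (rule sum.cong) simp_all
    thus ?thesis using d(3) that by simp
  qed
  have "(\<Sum>n\<in>N. (if side n then 1 else -1) * S n) = (if side n0 then 1 else -1) * S n0"
    using n0 finN S_others by (simp add: sum.remove)
  hence "S n0 = 0"
    using bipartite_signed_incidence_sum[OF finN finY ends, where d = d]
    by (simp add: S_def split: if_splits)
  hence "\<forall>n\<in>N. S n = 0" using S_others by blast
  with d(1,2) show ?thesis unfolding S_def by (intro exI[of _ d] conjI)
qed

section \<open>Preferences and tie classes\<close>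

locale nu_setting =
  fixes V1 V2 :: "'v set" and E E1 E2 :: "'v set set"
    and pref :: "'v \<Rightarrow> 'v set \<Rightarrow> 'v set \<Rightarrow> bool"
  assumes setting: "setting V1 V2 E E1 E2 pref"
begin

abbreviation "V \<equiv> V1 \<union> V2"
abbreviation "B \<equiv> better E pref"
abbreviation "Q \<equiv> equiv_edges E pref"

definition W :: "'v \<Rightarrow> 'v set \<Rightarrow> 'v set set" where
  "W v e = {f \<in> inc E v. strict_pref pref v e f}"

lemma finite_V: "finite V"
  using setting unfolding setting_def by (elim conjE)

lemma V1_V2_disjoint: "V1 \<inter> V2 = {}"
  using setting unfolding setting_def by (elim conjE)

lemma edges_bipartite: "\<forall>e\<in>E. \<exists>a b. a \<in> V1 \<and> b \<in> V2 \<and> e = {a, b}"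
  using setting unfolding setting_def by (elim conjE)

lemma E1_E2_disjoint: "E1 \<inter> E2 = {}"
  using setting unfolding setting_def by (elim conjE)

lemma E1_Un_E2: "E1 \<union> E2 = E"
  using setting unfolding setting_def by (elim conjE)

lemma edgeE:
  assumes "e \<in> E"
  obtains a b where "a \<in> V1" "b \<in> V2" "e = {a, b}" "a \<noteq> b"
proof -
  obtain a b where "a \<in> V1" "b \<in> V2" "e = {a, b}" using assms edges_bipartite by blast
  moreover from this have "a \<noteq> b" using V1_V2_disjoint by blast
  ultimately show thesis using that by blast
qed

lemma edge_subset_V: "e \<in> E \<Longrightarrow> e \<subseteq> V"
  by (metis edgeE empty_subsetI insert_subset UnI1 UnI2)

lemma finite_E: "finite E"
proof -
  have "E \<subseteq> (\<lambda>(a, b). {a, b}) ` (V1 \<times> V2)" by (fastforce elim: edgeE)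
  moreover have "finite (V1 \<times> V2)" using finite_V by auto
  ultimately show ?thesis by (meson finite_imageI finite_subset)
qed

lemma finite_inc: "finite (inc E v)"
  using finite_subset[OF inc_subset finite_E] .

lemma card_edge: "e \<in> E \<Longrightarrow> card e = 2"
  by (erule edgeE) simp

lemma E2_if_not_E1: "e \<in> E \<Longrightarrow> e \<notin> E1 \<Longrightarrow> e \<in> E2"
  using E1_Un_E2 by blast

lemma E1_subset: "E1 \<subseteq> E" and E2_subset: "E2 \<subseteq> E"
  using E1_Un_E2 by blast+

lemma inc_vertex_in_V: "e \<in> inc E v \<Longrightarrow> v \<in> V"
  using edge_subset_V by (auto simp: mem_inc_iff)

lemma pref_axioms:
  assumes "v \<in> V"
  shows "\<forall>e\<in>insert {} (inc E v). \<forall>f\<in>insert {} (inc E v). \<forall>g\<in>insert {} (inc E v).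
           pref v e f \<longrightarrow> pref v f g \<longrightarrow> pref v e g"
    and "\<forall>e\<in>insert {} (inc E v). \<forall>f\<in>insert {} (inc E v). pref v e f \<or> pref v f e"
    and "\<forall>e\<in>inc E v. pref v e {} \<and> \<not> pref v {} e"
  using assms setting unfolding setting_def by blast+

lemma pref_trans:
  "e \<in> inc E v \<Longrightarrow> f \<in> inc E v \<Longrightarrow> g \<in> inc E v \<Longrightarrow> pref v e f \<Longrightarrow> pref v f g \<Longrightarrow> pref v e g"
  using pref_axioms(1)[OF inc_vertex_in_V, rule_format, of e v e f g] by simp

lemma pref_total: "e \<in> inc E v \<Longrightarrow> f \<in> inc E v \<Longrightarrow> pref v e f \<or> pref v f e"
  using pref_axioms(2)[OF inc_vertex_in_V, rule_format, of e v e f] by simp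

lemma pref_refl: "e \<in> inc E v \<Longrightarrow> pref v e e"
  using pref_total[of e v e] by simp

lemma pref_empty: "e \<in> inc E v \<Longrightarrow> pref v e {}"
  using pref_axioms(3)[OF inc_vertex_in_V, rule_format, of e v e] by simp

lemma not_pref_empty: "e \<in> inc E v \<Longrightarrow> \<not> pref v {} e"
  using pref_axioms(3)[OF inc_vertex_in_V, rule_format, of e v e] by simp

lemma not_pref_iff: "e \<in> inc E v \<Longrightarrow> f \<in> inc E v \<Longrightarrow> \<not> pref v e f \<longleftrightarrow> strict_pref pref v f e"
  using pref_total[of e v f] by (auto simp: strict_pref_def)

lemma strict_pref_pref_trans:
  "e \<in> inc E v \<Longrightarrow> f \<in> inc E v \<Longrightarrow> g \<in> inc E v \<Longrightarrow>
   strict_pref pref v f g \<Longrightarrow> pref v g e \<Longrightarrow> strict_pref pref v f e"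
  unfolding strict_pref_def using pref_trans[of f v g e] pref_trans[of g v e f] by blast

lemma pref_strict_pref_trans:
  "e \<in> inc E v \<Longrightarrow> f \<in> inc E v \<Longrightarrow> g \<in> inc E v \<Longrightarrow>
   pref v f g \<Longrightarrow> strict_pref pref v g e \<Longrightarrow> strict_pref pref v f e"
  unfolding strict_pref_def using pref_trans[of f v g e] pref_trans[of e v f g] by blast

lemma strict_pref_trans:
  "e \<in> inc E v \<Longrightarrow> f \<in> inc E v \<Longrightarrow> g \<in> inc E v \<Longrightarrow>
   strict_pref pref v e f \<Longrightarrow> strict_pref pref v f g \<Longrightarrow> strict_pref pref v e g"
  using strict_pref_pref_trans[of g v e f] by (simp add: strict_pref_def)

lemma mem_B: "f \<in> B v e \<longleftrightarrow> f \<in> inc E v \<and> strict_pref pref v f e"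
  by (simp add: better_def)

lemma mem_Q: "f \<in> Q v e \<longleftrightarrow> f \<in> inc E v \<and> indiff pref v f e"
  by (simp add: equiv_edges_def)

lemma mem_W: "f \<in> W v e \<longleftrightarrow> f \<in> inc E v \<and> strict_pref pref v e f"
  by (simp add: W_def)

lemma B_subset: "B v e \<subseteq> inc E v"
  by (auto simp: mem_B)

lemma Q_subset: "Q v e \<subseteq> inc E v"
  by (auto simp: mem_Q)

lemma W_subset: "W v e \<subseteq> inc E v"
  by (auto simp: mem_W)

lemma B_subset_E: "B v e \<subseteq> E"
  using B_subset inc_subset by (rule order_trans)

lemma Q_subset_E: "Q v e \<subseteq> E"
  using Q_subset inc_subset by (rule order_trans)

lemma finite_B: "finite (B v e)"
  using finite_subset[OF B_subset finite_inc] .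

lemma finite_Q: "finite (Q v e)"
  using finite_subset[OF Q_subset finite_inc] .

lemma finite_W: "finite (W v e)"
  using finite_subset[OF W_subset finite_inc] .

lemma Q_refl: "e \<in> inc E v \<Longrightarrow> e \<in> Q v e"
  by (simp add: mem_Q indiff_def pref_refl)

lemma Q_eq:
  assumes "f \<in> Q v e" "e \<in> inc E v"
  shows "Q v f = Q v e"
proof (intro set_eqI iffI)
  have f: "f \<in> inc E v" "pref v f e" "pref v e f" using assms(1) by (simp_all add: mem_Q indiff_def)
  fix g
  {
    assume "g \<in> Q v f"
    hence "g \<in> inc E v" "pref v g f" "pref v f g" by (simp_all add: mem_Q indiff_def)
    thus "g \<in> Q v e"
      using f assms(2) pref_trans[of g v f e] pref_trans[of e v f g] by (simp add: mem_Q indiff_def)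
  next
    assume "g \<in> Q v e"
    hence "g \<in> inc E v" "pref v g e" "pref v e g" by (simp_all add: mem_Q indiff_def)
    thus "g \<in> Q v f"
      using f assms(2) pref_trans[of g v e f] pref_trans[of f v e g] by (simp add: mem_Q indiff_def)
  }
qed

lemma B_Q_disjoint: "B v e \<inter> Q v e = {}"
  by (auto simp: mem_B mem_Q strict_pref_def indiff_def)

lemma sum_inc_split:
  assumes "e \<in> inc E v"
  shows "sum x (inc E v) = sum x (B v e) + sum x (Q v e) + sum x (W v e)"
proof -
  have "inc E v = B v e \<union> Q v e \<union> W v e"
  proof (intro equalityI subsetI)
    fix f assume f: "f \<in> inc E v"
    thus "f \<in> B v e \<union> Q v e \<union> W v e"
      using pref_total[OF assms f] by (auto simp: mem_B mem_Q mem_W strict_pref_def indiff_def)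
  qed (auto simp: mem_B mem_Q mem_W)
  moreover have "(B v e \<union> Q v e) \<inter> W v e = {}"
    by (auto simp: mem_B mem_Q mem_W strict_pref_def indiff_def)
  ultimately show ?thesis
    using B_Q_disjoint by (simp add: sum.union_disjoint finite_B finite_Q finite_W)
qed

lemma sum_incidences: "(\<Sum>v\<in>V. \<Sum>e\<in>inc E v. g v e) = (\<Sum>e\<in>E. \<Sum>v\<in>e. g v e)"
proof -
  have "(\<Sum>v\<in>V. \<Sum>e\<in>inc E v. g v e) = (\<Sum>v\<in>V. \<Sum>e | e \<in> E \<and> v \<in> e. g v e)"
    by (simp add: inc_def)
  also have "\<dots> = (\<Sum>e\<in>E. \<Sum>v | v \<in> V \<and> v \<in> e. g v e)"
    by (rule sum.swap_restrict[OF finite_V finite_E])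
  also have "\<dots> = (\<Sum>e\<in>E. \<Sum>v\<in>e. g v e)"
  proof (rule sum.cong[OF refl])
    fix e assume "e \<in> E"
    hence "{v. v \<in> V \<and> v \<in> e} = e" using edge_subset_V by blast
    thus "(\<Sum>v | v \<in> V \<and> v \<in> e. g v e) = (\<Sum>v\<in>e. g v e)" by simp
  qed
  finally show ?thesis .
qed

section \<open>The relaxation\<close>

definition relaxation :: "('v set \<Rightarrow> real) set" where
  "relaxation = {x.
       (\<forall>e. e \<notin> E \<longrightarrow> x e = 0) \<and> (\<forall>e\<in>E. 0 \<le> x e) \<and>
       (\<forall>v \<in> V. sum x (inc E v) \<le> 1) \<and>
       (\<forall>e \<in> E1. x e + (\<Sum>v\<in>e. sum x (B v e)) \<ge> 1) \<and>
       (\<forall>e \<in> E2. \<forall>v\<in>e. sum x (Q v e) + (\<Sum>w\<in>e. sum x (B w e)) \<ge> 1)}"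

lemma relaxation_zero: "x \<in> relaxation \<Longrightarrow> e \<notin> E \<Longrightarrow> x e = 0"
  by (simp add: relaxation_def)

lemma relaxation_nonneg: "x \<in> relaxation \<Longrightarrow> 0 \<le> x e"
  by (cases "e \<in> E") (simp_all add: relaxation_def)

lemma relaxation_vertex: "x \<in> relaxation \<Longrightarrow> v \<in> V \<Longrightarrow> sum x (inc E v) \<le> 1"
  by (simp add: relaxation_def)

lemma relaxation_E1: "x \<in> relaxation \<Longrightarrow> e \<in> E1 \<Longrightarrow> 1 \<le> x e + (\<Sum>v\<in>e. sum x (B v e))"
  by (simp add: relaxation_def)

lemma relaxation_E2:
  "x \<in> relaxation \<Longrightarrow> e \<in> E2 \<Longrightarrow> v \<in> e \<Longrightarrow> 1 \<le> sum x (Q v e) + (\<Sum>w\<in>e. sum x (B w e))"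
  by (simp add: relaxation_def)

lemma relaxation_support: "x \<in> relaxation \<Longrightarrow> x e \<noteq> 0 \<Longrightarrow> e \<in> E"
  using relaxation_zero by blast

lemma relaxation_convex_comb:
  assumes "A \<subseteq> relaxation" "finite A" "\<forall>s\<in>A. 0 \<le> u s" "sum u A = 1"
  shows "(\<lambda>e. \<Sum>s\<in>A. u s * s e) \<in> relaxation"
proof -
  let ?x = "\<lambda>e. \<Sum>s\<in>A. u s * s e"
  have sum_x: "sum ?x F = (\<Sum>s\<in>A. u s * sum s F)" for F
    by (simp add: sum_distrib_left sum.swap[of _ F])
  have sum_sum_x: "(\<Sum>v\<in>e. sum ?x (H v)) = (\<Sum>s\<in>A. u s * (\<Sum>v\<in>e. sum s (H v)))"
    for e and H :: "'v \<Rightarrow> 'v set set"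
    by (simp add: sum_x sum_distrib_left sum.swap[of _ e])
  have comb_ge: "1 \<le> (\<Sum>s\<in>A. u s * c s)" if "\<And>s. s \<in> A \<Longrightarrow> 1 \<le> c s" for c
  proof -
    have "(\<Sum>s\<in>A. u s * 1) \<le> (\<Sum>s\<in>A. u s * c s)"
      using that assms(3) by (intro sum_mono mult_left_mono) auto
    thus ?thesis using assms(4) by simp
  qed
  show ?thesis unfolding relaxation_def
  proof (intro CollectI conjI ballI allI impI)
    fix e assume "e \<notin> E"
    thus "?x e = 0" using assms(1) relaxation_zero by (intro sum.neutral) auto
  next
    fix e show "0 \<le> ?x e" using assms(1,3) relaxation_nonneg by (intro sum_nonneg) auto
  next
    fix v assume "v \<in> V"
    hence "(\<Sum>s\<in>A. u s * sum s (inc E v)) \<le> (\<Sum>s\<in>A. u s * 1)"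
      using assms(1,3) relaxation_vertex by (intro sum_mono mult_left_mono) auto
    thus "sum ?x (inc E v) \<le> 1" using assms(4) by (simp add: sum_x)
  next
    fix e assume "e \<in> E1"
    have "?x e + (\<Sum>v\<in>e. sum ?x (B v e)) = (\<Sum>s\<in>A. u s * (s e + (\<Sum>v\<in>e. sum s (B v e))))"
      unfolding sum_sum_x by (simp add: distrib_left sum.distrib)
    also have "1 \<le> \<dots>" using assms(1) relaxation_E1 \<open>e \<in> E1\<close> by (intro comb_ge) auto
    finally show "1 \<le> ?x e + (\<Sum>v\<in>e. sum ?x (B v e))" .
  next
    fix e v assume "e \<in> E2" "v \<in> e"
    have "sum ?x (Q v e) + (\<Sum>w\<in>e. sum ?x (B w e))
            = (\<Sum>s\<in>A. u s * (sum s (Q v e) + (\<Sum>w\<in>e. sum s (B w e))))"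
      unfolding sum_sum_x unfolding sum_x by (simp add: distrib_left sum.distrib)
    also have "1 \<le> \<dots>" using assms(1) relaxation_E2 \<open>e \<in> E2\<close> \<open>v \<in> e\<close> by (intro comb_ge) auto
    finally show "1 \<le> sum ?x (Q v e) + (\<Sum>w\<in>e. sum ?x (B w e))" .
  qed
qed

lemma medge_mem:
  assumes "matching E M" "medge M w \<noteq> {}"
  shows "medge M w \<in> M" "medge M w \<in> inc E w"
proof -
  have "M \<subseteq> E" "card (inc M w) \<le> 1" using assms(1) by (simp_all add: matching_def)
  moreover have "finite M" using finite_subset[OF \<open>M \<subseteq> E\<close> finite_E] .
  ultimately have "medge M w \<in> M" "w \<in> medge M w" using medge_cases[of M w] assms(2) by auto
  thus "medge M w \<in> M" "medge M w \<in> inc E w" using \<open>M \<subseteq> E\<close> by (auto simp: mem_inc_iff)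
qed

lemma medge_strictly_better:
  assumes "matching E M" "e \<in> inc E w" "\<not> pref w e (medge M w)"
  shows "medge M w \<in> M \<inter> B w e"
proof -
  have "medge M w \<noteq> {}" using assms(3) pref_empty[OF assms(2)] by auto
  hence "medge M w \<in> M" "medge M w \<in> inc E w" using medge_mem[OF assms(1)] by blast+
  thus ?thesis using assms(3) not_pref_iff[OF assms(2)] by (simp add: mem_B)
qed

lemma char_vec_better_cover:
  assumes "matching E M" "e \<in> E" "w \<in> e" "\<not> pref w e (medge M w)"
  shows "1 \<le> (\<Sum>w\<in>e. sum (char_vec M) (B w e))"
proof -
  have "medge M w \<in> M \<inter> B w e"
    using assms by (intro medge_strictly_better) (simp_all add: mem_inc_iff)
  hence "1 \<le> sum (char_vec M) (B w e)" by (intro char_vec_sum_ge_one finite_B) auto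
  also have "\<dots> \<le> (\<Sum>w\<in>e. sum (char_vec M) (B w e))"
    using assms(2,3) char_vec_sum_nonneg finite_subset[OF edge_subset_V finite_V]
    by (intro member_le_sum) auto
  finally show ?thesis .
qed

lemma char_vec_tie_cover:
  assumes stable: "nu_stable E E1 E2 pref M" and e: "e \<in> E2" "v \<in> e"
    and all_pref: "\<forall>w\<in>e. pref w e (medge M w)"
  shows "1 \<le> sum (char_vec M) (Q v e)"
proof (cases "e \<in> M")
  case True
  thus ?thesis using Q_refl[of e v] e E2_subset
    by (intro char_vec_sum_ge_one finite_Q) (auto simp: mem_inc_iff)
next
  case False
  with stable e have "\<not> strongly_blocks pref M e" by (auto simp: nu_stable_def)
  with all_pref False have "pref v (medge M v) e"
    using e(2) by (auto simp: strongly_blocks_def weakly_blocks_def strict_pref_def)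
  moreover have "e \<in> inc E v" using e E2_subset by (auto simp: mem_inc_iff)
  ultimately have "medge M v \<noteq> {}" using not_pref_empty by auto
  moreover have "matching E M" using stable by (simp add: nu_stable_def)
  ultimately have "medge M v \<in> M" "medge M v \<in> inc E v" using medge_mem by blast+
  moreover have "indiff pref v (medge M v) e"
    using \<open>pref v (medge M v) e\<close> all_pref e(2) by (simp add: indiff_def)
  ultimately show ?thesis by (intro char_vec_sum_ge_one finite_Q) (auto simp: mem_Q)
qed

lemma char_vec_in_relaxation:
  assumes stable: "nu_stable E E1 E2 pref M"
  shows "char_vec M \<in> relaxation"
proof -
  have matching: "matching E M" and "M \<subseteq> E" using stable by (auto simp: nu_stable_def matching_def)
  show ?thesis unfolding relaxation_def
  proof (intro CollectI conjI ballI allI impI)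
    fix e assume "e \<notin> E" thus "char_vec M e = 0" using \<open>M \<subseteq> E\<close> by (auto simp: char_vec_def)
  next
    fix e show "0 \<le> char_vec M e" by (simp add: char_vec_def)
  next
    fix v
    have "inc E v \<inter> M = inc M v" using \<open>M \<subseteq> E\<close> by (auto simp: mem_inc_iff)
    hence "sum (char_vec M) (inc E v) = card (inc M v)" by (simp add: sum_char_vec finite_inc)
    thus "sum (char_vec M) (inc E v) \<le> 1" using matching by (simp add: matching_def)
  next
    fix e assume e: "e \<in> E1"
    show "1 \<le> char_vec M e + (\<Sum>v\<in>e. sum (char_vec M) (B v e))"
    proof (cases "e \<in> M")
      case True thus ?thesis using char_vec_sum_nonneg by (simp add: char_vec_def sum_nonneg)
    next
      case False
      with stable e obtain w where "w \<in> e" "\<not> pref w e (medge M w)"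
        by (auto simp: nu_stable_def weakly_blocks_def)
      thus ?thesis using char_vec_better_cover[OF matching] e E1_subset False
        by (auto simp: char_vec_def)
    qed
  next
    fix e v assume e: "e \<in> E2" "v \<in> e"
    have "0 \<le> (\<Sum>w\<in>e. sum (char_vec M) (B w e))" by (intro sum_nonneg char_vec_sum_nonneg)
    moreover have "0 \<le> sum (char_vec M) (Q v e)" by (rule char_vec_sum_nonneg)
    ultimately show "1 \<le> sum (char_vec M) (Q v e) + (\<Sum>w\<in>e. sum (char_vec M) (B w e))"
      using char_vec_tie_cover[OF stable e] char_vec_better_cover[OF matching] e E2_subset by force
  qed
qed

lemma conv_hull_subset_relaxation:
  "conv_hull {char_vec M | M. nu_stable E E1 E2 pref M} \<subseteq> relaxation"
proof
  fix x assume "x \<in> conv_hull {char_vec M | M. nu_stable E E1 E2 pref M}"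
  then obtain A u where "finite A" "A \<subseteq> {char_vec M | M. nu_stable E E1 E2 pref M}"
    "\<forall>s\<in>A. 0 \<le> u s" "sum u A = 1" "x = (\<lambda>e. \<Sum>s\<in>A. u s * s e)"
    unfolding conv_hull_def by blast
  moreover from this have "A \<subseteq> relaxation" using char_vec_in_relaxation by blast
  ultimately show "x \<in> relaxation" using relaxation_convex_comb by blast
qed

section \<open>Complementary slackness\<close>

text \<open>The left-hand side of constraint (3), used for every edge: on \<open>E1\<close> it dominates the left-hand
  side of constraint (2), see \<open>cover_ge_one\<close>.\<close>

definition cover :: "('v set \<Rightarrow> real) \<Rightarrow> 'v \<Rightarrow> 'v set \<Rightarrow> real" where
  "cover x v e = sum x (Q v e) + (\<Sum>w\<in>e. sum x (B w e))"

lemma square_sum_inc: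
  fixes x :: "'v set \<Rightarrow> real"
  shows "(sum x (inc E v))\<^sup>2 = (\<Sum>e\<in>inc E v. x e * (2 * sum x (B v e) + sum x (Q v e)))"
proof -
  let ?I = "inc E v"
  \<comment> \<open>each ordered pair of comparable edges is counted once from either side\<close>
  have worse_better: "(\<Sum>e\<in>?I. x e * sum x (W v e)) = (\<Sum>e\<in>?I. x e * sum x (B v e))"
  proof -
    have "(\<Sum>e\<in>?I. x e * sum x (W v e)) = (\<Sum>e\<in>?I. \<Sum>f | f \<in> ?I \<and> strict_pref pref v e f. x e * x f)"
      unfolding W_def sum_distrib_left ..
    also have "\<dots> = (\<Sum>f\<in>?I. \<Sum>e | e \<in> ?I \<and> strict_pref pref v e f. x e * x f)"
      by (rule sum.swap_restrict[OF finite_inc finite_inc])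
    also have "\<dots> = (\<Sum>f\<in>?I. x f * sum x (B v f))"
      by (simp add: better_def sum_distrib_left mult.commute)
    finally show ?thesis .
  qed
  have "(sum x ?I)\<^sup>2 = (\<Sum>e\<in>?I. x e * (sum x (B v e) + sum x (Q v e) + sum x (W v e)))"
    by (simp add: power2_eq_square sum_distrib_right sum_inc_split cong: sum.cong)
  also have "\<dots> = (\<Sum>e\<in>?I. x e * (2 * sum x (B v e) + sum x (Q v e)))"
    using worse_better by (simp add: algebra_simps sum.distrib sum_distrib_left)
  finally show ?thesis .
qed

lemma weighted_cover_sum: "(\<Sum>v\<in>V. \<Sum>e\<in>inc E v. x e * cover x v e) = (\<Sum>v\<in>V. (sum x (inc E v))\<^sup>2)"
proof -
  have "(\<Sum>v\<in>V. \<Sum>e\<in>inc E v. x e * (\<Sum>w\<in>e. sum x (B w e)))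
        = (\<Sum>e\<in>E. \<Sum>v\<in>e. x e * (\<Sum>w\<in>e. sum x (B w e)))"
    by (rule sum_incidences)
  also have "\<dots> = (\<Sum>e\<in>E. \<Sum>w\<in>e. 2 * x e * sum x (B w e))"
    by (rule sum.cong[OF refl]) (simp add: card_edge sum_distrib_left mult.assoc)
  also have "\<dots> = (\<Sum>v\<in>V. \<Sum>e\<in>inc E v. 2 * x e * sum x (B v e))"
    by (rule sum_incidences[symmetric])
  finally have "(\<Sum>v\<in>V. \<Sum>e\<in>inc E v. x e * cover x v e)
                = (\<Sum>v\<in>V. \<Sum>e\<in>inc E v. x e * (2 * sum x (B v e) + sum x (Q v e)))"
    by (simp add: cover_def algebra_simps sum.distrib)
  thus ?thesis by (simp only: square_sum_inc)
qed

lemma cover_ge_one: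
  assumes "x \<in> relaxation" "e \<in> E" "v \<in> e"
  shows "1 \<le> cover x v e"
proof (cases "e \<in> E1")
  case True
  have "x e \<le> sum x (Q v e)"
    using assms Q_refl[of e v] relaxation_nonneg finite_Q
    by (intro member_le_sum) (auto simp: mem_inc_iff)
  thus ?thesis using relaxation_E1[OF assms(1) True] by (simp add: cover_def)
next
  case False
  thus ?thesis using relaxation_E2[OF assms(1) _ assms(3)] E2_if_not_E1 assms(2)
    by (simp add: cover_def)
qed

lemma slackness:
  assumes "x \<in> relaxation" "v \<in> V"
  shows "\<forall>e\<in>inc E v. x e * (cover x v e - 1) = 0"
    and "sum x (inc E v) * (1 - sum x (inc E v)) = 0"
proof -
  define L where "L v = (\<Sum>e\<in>inc E v. x e * (cover x v e - 1))" for v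
  define R where "R v = sum x (inc E v) * (1 - sum x (inc E v))" for v
  have term_nonneg: "0 \<le> x e * (cover x v e - 1)" if "e \<in> inc E v" for v e
    using that cover_ge_one[OF assms(1)] relaxation_nonneg[OF assms(1)] by (simp add: mem_inc_iff)
  have L_nonneg: "0 \<le> L v" for v unfolding L_def by (intro sum_nonneg term_nonneg)
  have R_nonneg: "0 \<le> R v" if "v \<in> V" for v
    using relaxation_vertex[OF assms(1) that] relaxation_nonneg[OF assms(1)]
    by (simp add: R_def sum_nonneg)
  have "(\<Sum>v\<in>V. L v) = (\<Sum>v\<in>V. \<Sum>e\<in>inc E v. x e * cover x v e) - (\<Sum>v\<in>V. sum x (inc E v))"
    by (simp add: L_def right_diff_distrib sum_subtractf)
  also have "\<dots> = - (\<Sum>v\<in>V. R v)"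
    by (simp add: weighted_cover_sum R_def power2_eq_square algebra_simps sum_subtractf)
  finally have "(\<Sum>v\<in>V. L v) + (\<Sum>v\<in>V. R v) = 0" by simp
  moreover have "0 \<le> (\<Sum>v\<in>V. L v)" "0 \<le> (\<Sum>v\<in>V. R v)"
    using L_nonneg R_nonneg by (auto intro: sum_nonneg)
  ultimately have "(\<Sum>v\<in>V. L v) = 0" "(\<Sum>v\<in>V. R v) = 0" by linarith+
  hence "L v = 0" "R v = 0"
    using assms(2) L_nonneg R_nonneg by (metis sum_nonneg_eq_0_iff[OF finite_V])+
  thus "\<forall>e\<in>inc E v. x e * (cover x v e - 1) = 0" "R v = 0"
    using sum_nonneg_eq_0_iff[OF finite_inc term_nonneg] by (simp_all add: L_def)
qed

lemma vertex_sum_zero_or_one: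
  "x \<in> relaxation \<Longrightarrow> v \<in> V \<Longrightarrow> sum x (inc E v) = 0 \<or> sum x (inc E v) = 1"
  using slackness(2) by simp

lemma cover_eq_one:
  assumes "x \<in> relaxation" "0 < x e" "v \<in> e"
  shows "cover x v e = 1"
proof -
  have "e \<in> inc E v" using relaxation_support[OF assms(1)] assms(2,3) by (simp add: mem_inc_iff)
  moreover from this have "v \<in> V" by (rule inc_vertex_in_V)
  ultimately show ?thesis using slackness(1)[OF assms(1)] assms(2) by fastforce
qed

lemma E1_tie_sum:
  assumes "x \<in> relaxation" "e \<in> E1" "0 < x e" "v \<in> e"
  shows "sum x (Q v e) = x e"
proof -
  have "1 \<le> x e + (\<Sum>w\<in>e. sum x (B w e))" by (rule relaxation_E1[OF assms(1,2)])
  moreover have "x e \<le> sum x (Q v e)"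
    using assms E1_subset Q_refl[of e v] relaxation_nonneg finite_Q
    by (intro member_le_sum) (auto simp: mem_inc_iff)
  ultimately show ?thesis using cover_eq_one[OF assms(1,3,4)] by (simp add: cover_def)
qed

section \<open>Perturbations along tie classes\<close>

definition support :: "('v set \<Rightarrow> real) \<Rightarrow> 'v set set" where
  "support x = {e \<in> E. 0 < x e}"

definition balanced :: "('v set \<Rightarrow> real) \<Rightarrow> bool" where
  "balanced d \<longleftrightarrow> (\<forall>v e. e \<in> inc E v \<longrightarrow> sum d (Q v e) = 0)"

definition admissible_direction :: "('v set \<Rightarrow> real) \<Rightarrow> ('v set \<Rightarrow> real) \<Rightarrow> bool" where
  "admissible_direction x d \<longleftrightarrow>
     balanced d \<and> (\<forall>e. d e \<noteq> 0 \<longrightarrow> 0 < x e \<and> e \<in> E2) \<and> (\<exists>e. d e \<noteq> 0)"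

lemma finite_support: "finite (support x)"
  using finite_E by (simp add: support_def)

lemma sum_restrict_support:
  assumes "\<And>e. 0 \<le> x e" "F \<subseteq> E"
  shows "sum x F = sum x (F \<inter> support x)"
proof (rule sum.mono_neutral_right)
  show "finite F" using assms(2) finite_subset finite_E by blast
  show "\<forall>e\<in>F - F \<inter> support x. x e = 0"
    using assms by (auto simp: support_def order.order_iff_strict)
qed auto

lemma balanced_sum_closed:
  assumes "balanced d" "F \<subseteq> inc E v" "\<And>f. f \<in> F \<Longrightarrow> Q v f \<subseteq> F"
  shows "sum d F = 0"
proof -
  have F_eq: "F = \<Union> (Q v ` F)" using assms(2,3) Q_refl by blast
  have "A \<inter> A' = {}" if A: "A \<in> Q v ` F" "A' \<in> Q v ` F" "A \<noteq> A'" for A A'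
  proof -
    obtain f f' where "f \<in> F" "f' \<in> F" "A = Q v f" "A' = Q v f'" using A(1,2) by blast
    moreover have "Q v g = Q v f" if "g \<in> Q v f" "f \<in> F" for g f
      using that assms(2) Q_eq by blast
    ultimately show ?thesis using A(3) by blast
  qed
  hence "sum d F = sum (sum d) (Q v ` F)"
    by (subst F_eq, subst sum.Union_disjoint) (auto simp: finite_Q)
  also have "\<dots> = 0" using assms(1,2) by (intro sum.neutral) (auto simp: balanced_def)
  finally show ?thesis .
qed

lemma balanced_sum_inc: "balanced d \<Longrightarrow> sum d (inc E v) = 0"
  by (rule balanced_sum_closed) (auto simp: mem_Q)

lemma balanced_sum_B: "balanced d \<Longrightarrow> e \<in> inc E v \<Longrightarrow> sum d (B v e) = 0"
  by (rule balanced_sum_closed) (auto simp: mem_Q mem_B indiff_def intro: pref_strict_pref_trans)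

lemma relaxation_add_balanced:
  assumes x: "x \<in> relaxation" and "balanced d" and "\<And>e. d e \<noteq> 0 \<Longrightarrow> e \<in> E2"
    and nonneg: "\<And>e. 0 \<le> x e + d e"
  shows "(\<lambda>e. x e + d e) \<in> relaxation"
proof -
  have B_unchanged: "(\<Sum>w\<in>e. sum (\<lambda>e. x e + d e) (B w e)) = (\<Sum>w\<in>e. sum x (B w e))" if "e \<in> E" for e
  proof -
    have "(\<Sum>w\<in>e. sum d (B w e)) = 0"
      using that balanced_sum_B[OF \<open>balanced d\<close>] by (intro sum.neutral) (auto simp: mem_inc_iff)
    thus ?thesis by (simp add: sum.distrib)
  qed
  show ?thesis unfolding relaxation_def
  proof (intro CollectI conjI ballI allI impI)
    fix e assume "e \<notin> E" thus "x e + d e = 0" using assms(3) E2_subset relaxation_zero[OF x] by auto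
  next
    fix e show "0 \<le> x e + d e" by (rule nonneg)
  next
    fix v assume "v \<in> V"
    thus "sum (\<lambda>e. x e + d e) (inc E v) \<le> 1"
      using relaxation_vertex[OF x] balanced_sum_inc[OF \<open>balanced d\<close>] by (simp add: sum.distrib)
  next
    fix e assume e: "e \<in> E1"
    hence "d e = 0" using assms(3) E1_E2_disjoint by blast
    thus "1 \<le> x e + d e + (\<Sum>v\<in>e. sum (\<lambda>e. x e + d e) (B v e))"
      using B_unchanged relaxation_E1[OF x e] e E1_subset by auto
  next
    fix e v assume e: "e \<in> E2" "v \<in> e"
    hence "e \<in> inc E v" using E2_subset by (auto simp: mem_inc_iff)
    hence "sum (\<lambda>e. x e + d e) (Q v e) = sum x (Q v e)"
      using \<open>balanced d\<close> by (simp add: sum.distrib balanced_def)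
    thus "1 \<le> sum (\<lambda>e. x e + d e) (Q v e) + (\<Sum>w\<in>e. sum (\<lambda>e. x e + d e) (B w e))"
      using B_unchanged relaxation_E2[OF x e] e E2_subset by auto
  qed
qed

lemma balanced_sign_change:
  assumes "balanced d" "e \<in> E" "d e \<noteq> 0"
  shows "\<exists>f. d f < 0" and "\<exists>f. 0 < d f"
proof -
  obtain v where "v \<in> e" using assms(2) by (auto elim: edgeE)
  hence e: "e \<in> inc E v" using assms(2) by (simp add: mem_inc_iff)
  have sum0: "sum d (inc E v) = 0" by (rule balanced_sum_inc[OF assms(1)])
  show "\<exists>f. d f < 0"
  proof (rule ccontr)
    assume "\<nexists>f. d f < 0"
    hence "\<forall>f\<in>inc E v. d f = 0" using sum0 sum_nonneg_eq_0_iff[OF finite_inc] by (metis not_less)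
    thus False using e assms(3) by blast
  qed
  show "\<exists>f. 0 < d f"
  proof (rule ccontr)
    assume "\<nexists>f. 0 < d f"
    hence "\<forall>f\<in>inc E v. - d f = 0"
      using sum0 sum_nonneg_eq_0_iff[OF finite_inc, where f = "\<lambda>f. - d f"]
      by (simp add: sum_negf not_less)
    thus False using e assms(3) by auto
  qed
qed

lemma shrink_support_along:
  assumes x: "x \<in> relaxation" and "balanced d" and d_supp: "\<And>e. d e \<noteq> 0 \<Longrightarrow> 0 < x e \<and> e \<in> E2"
    and "\<exists>e. d e < 0"
  obtains t where "0 < t" "(\<lambda>e. x e + t * d e) \<in> relaxation"
    "card (support (\<lambda>e. x e + t * d e)) < card (support x)"
proof -
  define N where "N = {e. d e < 0}"
  have "N \<subseteq> E" using d_supp E2_subset by (force simp: N_def)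
  hence "finite N" using finite_subset finite_E by blast
  \<comment> \<open>the largest step keeping \<open>x + t d\<close> nonnegative; it kills the minimizing edge\<close>
  define t where "t = Min ((\<lambda>e. x e / - d e) ` N)"
  have "N \<noteq> {}" using assms(4) by (simp add: N_def)
  hence "t \<in> (\<lambda>e. x e / - d e) ` N" unfolding t_def using \<open>finite N\<close> by (intro Min_in) auto
  then obtain e1 where e1: "d e1 < 0" "t = x e1 / - d e1" by (auto simp: N_def)
  have t_le: "t \<le> x e / - d e" if "d e < 0" for e
    unfolding t_def using \<open>finite N\<close> that by (intro Min_le) (auto simp: N_def)
  have "0 < x e1" using d_supp e1(1) by fastforce
  hence "0 < t" using e1 by (simp add: divide_pos_neg)
  have nonneg: "0 \<le> x e + t * d e" for e
  proof (cases "d e < 0")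
    case True
    hence "0 < - d e" by simp
    hence "t * - d e \<le> x e" using t_le[OF True] pos_le_divide_eq by blast
    thus ?thesis by simp
  next
    case False
    thus ?thesis using relaxation_nonneg[OF x, of e] \<open>0 < t\<close> by simp
  qed
  have "balanced (\<lambda>e. t * d e)"
    using \<open>balanced d\<close> by (simp add: balanced_def sum_distrib_left[symmetric])
  hence "(\<lambda>e. x e + t * d e) \<in> relaxation"
    using d_supp nonneg by (intro relaxation_add_balanced[OF x]) auto
  moreover have "support (\<lambda>e. x e + t * d e) \<subset> support x"
  proof -
    have "x e1 + t * d e1 = 0" using e1 by simp
    moreover have "0 < x e" if "0 < x e + t * d e" for e
      using that d_supp[of e] by (cases "d e = 0") auto
    ultimately have "support (\<lambda>e. x e + t * d e) \<subseteq> support x - {e1}"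
      by (auto simp: support_def)
    moreover have "e1 \<in> support x" using \<open>0 < x e1\<close> d_supp e1(1) E2_subset
      by (auto simp: support_def)
    ultimately show ?thesis by blast
  qed
  hence "card (support (\<lambda>e. x e + t * d e)) < card (support x)"
    using finite_support by (rule psubset_card_mono[rotated])
  ultimately show thesis using that \<open>0 < t\<close> by blast
qed

lemma split_along_admissible_direction:
  assumes x: "x \<in> relaxation" and "admissible_direction x d"
  obtains y z \<mu> where "y \<in> relaxation" "z \<in> relaxation"
    "card (support y) < card (support x)" "card (support z) < card (support x)"
    "0 \<le> \<mu>" "\<mu> \<le> 1" "x = (\<lambda>e. \<mu> * y e + (1 - \<mu>) * z e)"
proof -
  have "balanced d" and d_supp: "\<And>e. d e \<noteq> 0 \<Longrightarrow> 0 < x e \<and> e \<in> E2"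
    using assms(2) by (auto simp: admissible_direction_def)
  obtain e0 where "d e0 \<noteq> 0" using assms(2) by (auto simp: admissible_direction_def)
  hence "e0 \<in> E" using d_supp E2_subset by blast
  have "balanced (\<lambda>e. - d e)" using \<open>balanced d\<close> by (simp add: balanced_def sum_negf)
  moreover have "\<And>e. - d e \<noteq> 0 \<Longrightarrow> 0 < x e \<and> e \<in> E2" using d_supp by simp
  moreover have "\<exists>e. - d e < 0"
    using balanced_sign_change(2)[OF \<open>balanced d\<close> \<open>e0 \<in> E\<close> \<open>d e0 \<noteq> 0\<close>] by auto
  ultimately obtain t2 where t2: "0 < t2" "(\<lambda>e. x e + t2 * - d e) \<in> relaxation"
      "card (support (\<lambda>e. x e + t2 * - d e)) < card (support x)"
    by (rule shrink_support_along[OF x])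
  obtain t1 where t1: "0 < t1" "(\<lambda>e. x e + t1 * d e) \<in> relaxation"
      "card (support (\<lambda>e. x e + t1 * d e)) < card (support x)"
    using shrink_support_along[OF x \<open>balanced d\<close> d_supp]
      balanced_sign_change(1)[OF \<open>balanced d\<close> \<open>e0 \<in> E\<close> \<open>d e0 \<noteq> 0\<close>] by blast
  define \<mu> where "\<mu> = t2 / (t1 + t2)"
  have weights: "\<mu> * t1 = (1 - \<mu>) * t2" using t1(1) t2(1) by (simp add: \<mu>_def field_simps)
  have "x = (\<lambda>e. \<mu> * (x e + t1 * d e) + (1 - \<mu>) * (x e + t2 * - d e))"
  proof (rule ext)
    fix e
    have "\<mu> * (x e + t1 * d e) + (1 - \<mu>) * (x e + t2 * - d e) = x e + (\<mu> * t1 - (1 - \<mu>) * t2) * d e"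
      by (simp add: algebra_simps)
    thus "x e = \<mu> * (x e + t1 * d e) + (1 - \<mu>) * (x e + t2 * - d e)" using weights by simp
  qed
  moreover have "0 \<le> \<mu>" "\<mu> \<le> 1" using t1(1) t2(1) by (auto simp: \<mu>_def)
  ultimately show thesis using that t1 t2 by blast
qed

text \<open>Crowded edges, together with the tie classes at their endpoints (\<open>crowded_nodes\<close>), form a
  bipartite multigraph of minimum degree \<open>2\<close>; a kernel vector of its incidence matrix is an
  admissible direction.\<close>

definition crowded_edges :: "('v set \<Rightarrow> real) \<Rightarrow> 'v set set" where
  "crowded_edges x = {e \<in> support x. \<exists>v\<in>e. 2 \<le> card (Q v e \<inter> support x)}"

definition crowded_nodes :: "('v set \<Rightarrow> real) \<Rightarrow> ('v \<times> 'v set set) set" where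
  "crowded_nodes x = {(v, Q v e) | v e. e \<in> crowded_edges x \<and> v \<in> e}"

lemma finite_crowded_edges: "finite (crowded_edges x)"
  by (rule finite_subset[OF _ finite_support]) (auto simp: crowded_edges_def)

lemma mem_tie_class_support: "e \<in> support x \<Longrightarrow> v \<in> e \<Longrightarrow> e \<in> Q v e \<inter> support x"
  using Q_refl by (auto simp: support_def mem_inc_iff)

lemma two_le_card_iff_ne_singleton:
  assumes "finite S" "e \<in> S"
  shows "2 \<le> card S \<longleftrightarrow> S \<noteq> {e}"
proof
  assume "S \<noteq> {e}"
  then obtain f where "f \<in> S" "f \<noteq> e" using assms(2) by blast
  hence "card {e, f} \<le> card S" using assms by (intro card_mono) auto
  thus "2 \<le> card S" using \<open>f \<noteq> e\<close> by simp
qed auto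

lemma crowded_tie_sum_gt:
  assumes x: "x \<in> relaxation" and e: "e \<in> support x" "v \<in> e"
    and crowded: "2 \<le> card (Q v e \<inter> support x)"
  shows "x e < sum x (Q v e)"
proof -
  have "Q v e \<inter> support x \<noteq> {e}"
    using crowded two_le_card_iff_ne_singleton[OF _ mem_tie_class_support[OF e]] finite_support
    by auto
  then obtain f where f: "f \<in> Q v e \<inter> support x" "f \<noteq> e" using mem_tie_class_support[OF e] by blast
  have "x e + x f = sum x {e, f}" using f(2) by simp
  also have "\<dots> \<le> sum x (Q v e \<inter> support x)"
    using mem_tie_class_support[OF e] f relaxation_nonneg[OF x] finite_support
    by (intro sum_mono2) auto
  also have "\<dots> = sum x (Q v e)" using sum_restrict_support[OF relaxation_nonneg[OF x] Q_subset_E] ..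
  finally show ?thesis using f(1) by (simp add: support_def)
qed

lemma crowded_not_E1:
  assumes "x \<in> relaxation" "e \<in> support x" "v \<in> e" "2 \<le> card (Q v e \<inter> support x)"
  shows "e \<notin> E1"
  using crowded_tie_sum_gt[OF assms] E1_tie_sum[OF assms(1) _ _ assms(3)] assms(2)
  by (auto simp: support_def)

lemma crowded_at_both_ends:
  assumes x: "x \<in> relaxation" and "e \<in> crowded_edges x" "v \<in> e"
  shows "2 \<le> card (Q v e \<inter> support x)"
proof (rule ccontr)
  assume not_crowded: "\<not> 2 \<le> card (Q v e \<inter> support x)"
  obtain u where u: "u \<in> e" "2 \<le> card (Q u e \<inter> support x)" and e: "e \<in> support x"
    using assms(2) by (auto simp: crowded_edges_def)
  have "Q v e \<inter> support x = {e}"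
    using not_crowded two_le_card_iff_ne_singleton[OF _ mem_tie_class_support[OF e assms(3)]]
      finite_support by auto
  hence "sum x (Q v e) = x e" using sum_restrict_support[OF relaxation_nonneg[OF x] Q_subset_E]
    by simp
  also have "\<dots> < sum x (Q u e)" by (rule crowded_tie_sum_gt[OF x e u(1,2)])
  finally show False
    using cover_eq_one[OF x _ u(1)] cover_eq_one[OF x _ assms(3)] e
    by (auto simp: support_def cover_def)
qed

lemma crowded_nodes_at_edge:
  assumes x: "x \<in> relaxation" and y: "y \<in> crowded_edges x" "y = {a, b}"
  shows "{n \<in> crowded_nodes x. y \<in> snd n} = {(a, Q a y), (b, Q b y)}"
proof (intro set_eqI iffI)
  fix n assume "n \<in> {n \<in> crowded_nodes x. y \<in> snd n}"
  then obtain v e where n: "n = (v, Q v e)" "e \<in> crowded_edges x" "v \<in> e" "y \<in> Q v e"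
    by (auto simp: crowded_nodes_def)
  have "e \<in> inc E v" using n(2,3) by (simp add: crowded_edges_def support_def mem_inc_iff)
  hence "Q v y = Q v e" using Q_eq n(4) by blast
  moreover have "v \<in> y" using n(4) by (simp add: mem_Q mem_inc_iff)
  ultimately show "n \<in> {(a, Q a y), (b, Q b y)}" using n(1) y(2) by auto
next
  fix n assume "n \<in> {(a, Q a y), (b, Q b y)}"
  moreover have "y \<in> support x" using y(1) by (simp add: crowded_edges_def)
  ultimately show "n \<in> {n \<in> crowded_nodes x. y \<in> snd n}"
    using y mem_tie_class_support[of y x] by (auto simp: crowded_nodes_def)
qed

lemma crowded_node_degree:
  assumes x: "x \<in> relaxation" and "n \<in> crowded_nodes x"
  shows "2 \<le> card {y \<in> crowded_edges x. y \<in> snd n}"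
proof -
  obtain v e where n: "n = (v, Q v e)" "e \<in> crowded_edges x" "v \<in> e"
    using assms(2) by (auto simp: crowded_nodes_def)
  have crowded: "2 \<le> card (Q v e \<inter> support x)" by (rule crowded_at_both_ends[OF x n(2,3)])
  have "e \<in> inc E v" using n(2,3) by (simp add: crowded_edges_def support_def mem_inc_iff)
  hence "Q v e \<inter> support x \<subseteq> crowded_edges x"
  proof (intro subsetI)
    fix f assume f: "f \<in> Q v e \<inter> support x"
    hence "Q v f = Q v e" "v \<in> f" using Q_eq \<open>e \<in> inc E v\<close> by (auto simp: mem_Q mem_inc_iff)
    hence "2 \<le> card (Q v f \<inter> support x)" using crowded by simp
    thus "f \<in> crowded_edges x" using f \<open>v \<in> f\<close> unfolding crowded_edges_def by blast
  qed
  hence "{y \<in> crowded_edges x. y \<in> snd n} = Q v e \<inter> support x"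
    using n(1) by (auto simp: crowded_edges_def)
  thus ?thesis using crowded by simp
qed

lemma finite_crowded_nodes: "finite (crowded_nodes x)"
proof -
  have "crowded_nodes x = (\<lambda>(e, v). (v, Q v e)) ` (SIGMA e:crowded_edges x. e)"
    unfolding crowded_nodes_def by fast
  moreover have "finite (SIGMA e:crowded_edges x. e)"
    using finite_crowded_edges finite_subset[OF edge_subset_V finite_V]
    by (intro finite_SigmaI) (auto simp: crowded_edges_def support_def)
  ultimately show ?thesis by simp
qed

lemma crowded_edge_sides:
  assumes "x \<in> relaxation" "y \<in> crowded_edges x"
  shows "\<exists>a b. fst a \<in> V1 \<and> fst b \<notin> V1 \<and> {n \<in> crowded_nodes x. y \<in> snd n} = {a, b}"
proof -
  obtain a b where ab: "a \<in> V1" "b \<in> V2" "y = {a, b}"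
    using assms(2) by (auto simp: crowded_edges_def support_def elim: edgeE)
  hence "b \<notin> V1" using V1_V2_disjoint by blast
  thus ?thesis using crowded_nodes_at_edge[OF assms ab(3)] ab(1)
    by (intro exI[of _ "(a, Q a y)"] exI[of _ "(b, Q b y)"]) simp
qed

lemma crowded_edge_E2: "x \<in> relaxation \<Longrightarrow> y \<in> crowded_edges x \<Longrightarrow> 0 < x y \<and> y \<in> E2"
  using crowded_not_E1 E2_if_not_E1 by (auto simp: crowded_edges_def support_def)

lemma balanced_if_crowded_circulation:
  assumes supp: "\<forall>y. y \<notin> crowded_edges x \<longrightarrow> d y = 0"
    and circ: "\<forall>n\<in>crowded_nodes x. (\<Sum>y | y \<in> crowded_edges x \<and> y \<in> snd n. d y) = 0"
  shows "balanced d"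
  unfolding balanced_def
proof (intro allI impI)
  fix u f assume "f \<in> inc E u"
  have "sum d (Q u f) = (\<Sum>y | y \<in> crowded_edges x \<and> y \<in> Q u f. d y)"
    using supp finite_Q by (intro sum.mono_neutral_right) auto
  also have "\<dots> = 0"
  proof (cases "\<exists>g\<in>Q u f. g \<in> crowded_edges x")
    case True
    then obtain g where g: "g \<in> Q u f" "g \<in> crowded_edges x" by blast
    have "u \<in> g" using g(1) by (simp add: mem_Q mem_inc_iff)
    hence "(u, Q u g) \<in> crowded_nodes x" using g(2) unfolding crowded_nodes_def by blast
    hence "(u, Q u f) \<in> crowded_nodes x" using Q_eq[OF g(1) \<open>f \<in> inc E u\<close>] by simp
    from circ[rule_format, OF this] show ?thesis by simp
  next
    case False
    hence no_crowded: "{y. y \<in> crowded_edges x \<and> y \<in> Q u f} = {}" by blast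
    show ?thesis unfolding no_crowded by simp
  qed
  finally show "sum d (Q u f) = 0" .
qed

lemma unique_positive_in_tie_class:
  assumes x: "x \<in> relaxation" and no_dir: "\<nexists>d. admissible_direction x d"
    and e: "e \<in> support x" "v \<in> e"
  shows "Q v e \<inter> support x = {e}"
proof (rule ccontr)
  assume "Q v e \<inter> support x \<noteq> {e}"
  hence "2 \<le> card (Q v e \<inter> support x)"
    using two_le_card_iff_ne_singleton[OF _ mem_tie_class_support[OF e]] finite_support by blast
  hence "crowded_edges x \<noteq> {}" using e unfolding crowded_edges_def by blast
  then obtain d :: "'v set \<Rightarrow> real" where d: "\<forall>y. y \<notin> crowded_edges x \<longrightarrow> d y = 0"
    "\<exists>y\<in>crowded_edges x. d y \<noteq> 0"
    "\<forall>n\<in>crowded_nodes x. (\<Sum>y | y \<in> crowded_edges x \<and> y \<in> snd n. d y) = 0"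
    using bipartite_incidence_nontrivial_kernel[OF finite_crowded_nodes finite_crowded_edges _
        crowded_edge_sides[OF x] crowded_node_degree[OF x]]
    by blast
  have "admissible_direction x d"
    unfolding admissible_direction_def
    using balanced_if_crowded_circulation[OF d(1,3)] d(1,2) crowded_edge_E2[OF x] by blast
  thus False using no_dir by blast
qed

lemma sum_le_if_positive_subset:
  fixes x :: "'v set \<Rightarrow> real"
  assumes "\<And>e. 0 \<le> x e" "F \<subseteq> E" "G \<subseteq> E" "\<And>f. f \<in> F \<Longrightarrow> 0 < x f \<Longrightarrow> f \<in> G"
  shows "sum x F \<le> sum x G"
proof -
  have "sum x F = sum x (F \<inter> support x)" by (rule sum_restrict_support[OF assms(1,2)])
  also have "\<dots> \<le> sum x (G \<inter> support x)"
    using assms(1,4) finite_support by (intro sum_mono2) (auto simp: support_def)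
  also have "\<dots> = sum x G" by (rule sum_restrict_support[OF assms(1,3), symmetric])
  finally show ?thesis .
qed

lemma sum_eq_zero_if_no_positive:
  fixes x :: "'v set \<Rightarrow> real"
  assumes "\<And>e. 0 \<le> x e" "\<And>f. f \<in> F \<Longrightarrow> \<not> 0 < x f"
  shows "sum x F = 0"
  using assms by (intro sum.neutral) (metis less_eq_real_def)

end

section \<open>The top matching\<close>

locale unique_support = nu_setting V1 V2 E E1 E2 pref
  for V1 V2 :: "'v set" and E E1 E2 :: "'v set set" and pref :: "'v \<Rightarrow> 'v set \<Rightarrow> 'v set \<Rightarrow> bool" +
  fixes x :: "'v set \<Rightarrow> real"
  assumes x_relaxation: "x \<in> relaxation"
    and unique: "\<And>e v. e \<in> support x \<Longrightarrow> v \<in> e \<Longrightarrow> Q v e \<inter> support x = {e}"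
begin

lemma x_nonneg: "0 \<le> x e"
  by (rule relaxation_nonneg[OF x_relaxation])

lemma positive_in_E: "0 < x e \<Longrightarrow> e \<in> E"
  using relaxation_support[OF x_relaxation] by force

lemma positive_inc: "0 < x e \<Longrightarrow> v \<in> e \<Longrightarrow> e \<in> inc E v"
  using positive_in_E by (simp add: mem_inc_iff)

lemma vertex_sum_one: "0 < x e \<Longrightarrow> v \<in> e \<Longrightarrow> sum x (inc E v) = 1"
proof -
  assume e: "0 < x e" "v \<in> e"
  hence "v \<in> V" using positive_in_E edge_subset_V by blast
  moreover have "x e \<le> sum x (inc E v)"
    using e positive_inc x_nonneg finite_inc by (intro member_le_sum) auto
  ultimately show ?thesis using vertex_sum_zero_or_one[OF x_relaxation] e(1) by fastforce
qed

lemma tied_positive_eq: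
  assumes "0 < x e" "0 < x f" "v \<in> e" "f \<in> inc E v" "indiff pref v f e"
  shows "f = e"
proof -
  have "f \<in> Q v e \<inter> support x"
    using assms positive_in_E by (simp add: mem_Q support_def)
  moreover have "Q v e \<inter> support x = {e}"
    using unique assms(1,3) positive_in_E by (simp add: support_def)
  ultimately show ?thesis by blast
qed

lemma better_eq_worse:
  assumes "0 < x e" "e = {a, b}" "a \<noteq> b"
  shows "sum x (B a e) = sum x (W b e)"
proof -
  have "cover x b e = 1" using cover_eq_one[OF x_relaxation assms(1)] assms(2) by simp
  moreover have "sum x (inc E b) = sum x (B b e) + sum x (Q b e) + sum x (W b e)"
    using assms positive_inc by (intro sum_inc_split) simp
  ultimately show ?thesis
    using vertex_sum_one[OF assms(1)] assms(2,3) by (simp add: cover_def)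
qed

text \<open>By \<open>better_eq_worse\<close>, the edges of the support that are a first choice of their
  \<open>V1\<close>-endpoint within the support are exactly those that are a last choice of their \<open>V2\<close>-endpoint.\<close>

definition top_matching :: "'v set set" where
  "top_matching = {e \<in> E. 0 < x e \<and> (\<exists>a\<in>e. a \<in> V1 \<and> sum x (B a e) = 0)}"

lemma top_matching_positive: "e \<in> top_matching \<Longrightarrow> 0 < x e"
  and top_matching_subset: "top_matching \<subseteq> E"
  by (auto simp: top_matching_def)

lemma finite_top_matching: "finite top_matching"
  using finite_subset[OF top_matching_subset finite_E] .

lemma top_matching_iff:
  assumes "0 < x e" "e = {a, b}" "a \<in> V1" "b \<in> V2"
  shows "e \<in> top_matching \<longleftrightarrow> sum x (B a e) = 0"
    and "e \<in> top_matching \<longleftrightarrow> sum x (W b e) = 0"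
proof -
  have "a \<noteq> b" "b \<notin> V1" using assms(3,4) V1_V2_disjoint by blast+
  thus "e \<in> top_matching \<longleftrightarrow> sum x (B a e) = 0"
    using assms positive_in_E by (auto simp: top_matching_def)
  thus "e \<in> top_matching \<longleftrightarrow> sum x (W b e) = 0"
    using better_eq_worse[OF assms(1,2) \<open>a \<noteq> b\<close>] by simp
qed

lemma sum_zero_imp_zero: "sum x F = 0 \<Longrightarrow> F \<subseteq> E \<Longrightarrow> f \<in> F \<Longrightarrow> x f = 0"
  using sum_nonneg_eq_0_iff[of F x] x_nonneg finite_subset[OF _ finite_E] by blast

lemma top_matching_best_at_V1:
  assumes "e \<in> top_matching" "a \<in> e" "a \<in> V1" "f \<in> inc E a" "0 < x f"
  shows "pref a e f"
proof (rule ccontr)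
  obtain a' b where ab: "a' \<in> V1" "b \<in> V2" "e = {a', b}"
    using assms(1) top_matching_subset by (blast elim: edgeE)
  hence "a' = a" using assms(2,3) V1_V2_disjoint by blast
  hence "sum x (B a e) = 0"
    using top_matching_iff(1)[OF top_matching_positive[OF assms(1)] ab(3,1,2)] assms(1)
    by simp
  moreover assume "\<not> pref a e f"
  hence "f \<in> B a e" using not_pref_iff assms(2,4) top_matching_positive[OF assms(1)] positive_inc
    by (simp add: mem_B)
  ultimately show False using sum_zero_imp_zero[OF _ B_subset_E] assms(5) by force
qed

lemma top_matching_worst_at_V2:
  assumes "e \<in> top_matching" "b \<in> e" "b \<in> V2" "f \<in> inc E b" "0 < x f"
  shows "pref b f e"
proof (rule ccontr)
  obtain a b' where ab: "a \<in> V1" "b' \<in> V2" "e = {a, b'}"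
    using assms(1) top_matching_subset by (blast elim: edgeE)
  hence "b' = b" using assms(2,3) V1_V2_disjoint by blast
  hence "sum x (W b e) = 0"
    using top_matching_iff(2)[OF top_matching_positive[OF assms(1)] ab(3,1,2)] assms(1)
    by simp
  moreover assume "\<not> pref b f e"
  hence "f \<in> W b e" using not_pref_iff assms(2,4) top_matching_positive[OF assms(1)] positive_inc
    by (simp add: mem_W)
  ultimately show False
    using sum_zero_imp_zero[OF _ _ \<open>f \<in> W b e\<close>] W_subset inc_subset assms(5) by force
qed

lemma top_matching_unique:
  assumes "e \<in> top_matching" "f \<in> top_matching" "v \<in> e" "v \<in> f"
  shows "f = e"
proof -
  have pos: "0 < x e" "0 < x f" using assms(1,2) top_matching_positive by blast+
  have inc: "e \<in> inc E v" "f \<in> inc E v" using pos assms(3,4) positive_inc by blast+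
  have "v \<in> V" using inc(1) by (rule inc_vertex_in_V)
  hence "pref v e f \<and> pref v f e"
    using top_matching_best_at_V1[OF assms(1,3) _ inc(2) pos(2)]
      top_matching_best_at_V1[OF assms(2,4) _ inc(1) pos(1)]
      top_matching_worst_at_V2[OF assms(1,3) _ inc(2) pos(2)]
      top_matching_worst_at_V2[OF assms(2,4) _ inc(1) pos(1)] by blast
  thus ?thesis using tied_positive_eq[OF pos assms(3) inc(2)] by (simp add: indiff_def)
qed

lemma top_matching_covers:
  assumes "0 < x f" "v \<in> f"
  shows "\<exists>e\<in>top_matching. v \<in> e"
proof -
  let ?P = "{e \<in> inc E v. 0 < x e}"
  have "?P \<noteq> {}" using assms positive_inc by blast
  \<comment> \<open>a positive edge with no positive edge beyond it, in the direction that matters at \<open>v\<close>\<close>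
  define R where
    "R f e = (if v \<in> V1 then strict_pref pref v f e else strict_pref pref v e f)" for f e
  have R_trans: "R e g" if "e \<in> inc E v" "f \<in> inc E v" "g \<in> inc E v" "R e f" "R f g" for e f g
    using that strict_pref_trans[of e v f g] strict_pref_trans[of g v f e]
    by (simp add: R_def split: if_splits)
  have R_irrefl: "\<not> R e e" if "e \<in> inc E v" for e by (simp add: R_def strict_pref_def)
  obtain e where e: "e \<in> ?P" "\<And>f. f \<in> inc E v \<Longrightarrow> R f e \<Longrightarrow> f \<notin> ?P"
  proof (rule finite_strict_order_has_minimal[of "inc E v" ?P R])
    show "finite (inc E v)" by (rule finite_inc)
    show "?P \<subseteq> inc E v" by blast
    show "?P \<noteq> {}" by fact
    show "\<And>e f g. e \<in> inc E v \<Longrightarrow> f \<in> inc E v \<Longrightarrow> g \<in> inc E v \<Longrightarrow> R e f \<Longrightarrow> R f g \<Longrightarrow> R e g"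
      by (rule R_trans)
    show "\<And>e. e \<in> inc E v \<Longrightarrow> \<not> R e e" by (rule R_irrefl)
  qed (rule that)
  have "e \<in> E" using e(1) by (simp add: mem_inc_iff)
  then obtain a b where ab: "a \<in> V1" "b \<in> V2" "e = {a, b}" by (blast elim: edgeE)
  have v: "v = a \<or> v = b" using e(1) ab(3) by (simp add: mem_inc_iff)
  have "sum x (if v \<in> V1 then B v e else W v e) = 0"
    using e(2)
    by (intro sum_eq_zero_if_no_positive[OF x_nonneg]) (auto simp: R_def mem_B mem_W split: if_splits)
  hence "e \<in> top_matching"
    using top_matching_iff[of e a b] ab e(1) v V1_V2_disjoint by (auto split: if_splits)
  thus ?thesis using e(1) by (auto simp: mem_inc_iff)
qed

lemma matching_top_matching: "matching E top_matching"
  unfolding matching_def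
proof (intro conjI allI top_matching_subset)
  fix v
  have "finite (inc top_matching v)" using finite_subset[OF inc_subset finite_top_matching] .
  moreover have "\<forall>e\<in>inc top_matching v. \<forall>f\<in>inc top_matching v. e = f"
  proof (intro ballI)
    fix e f assume "e \<in> inc top_matching v" "f \<in> inc top_matching v"
    thus "e = f" using top_matching_unique[of f e v] by (simp add: mem_inc_iff)
  qed
  ultimately show "card (inc top_matching v) \<le> 1" by (simp add: card_le_Suc0_iff_eq)
qed

abbreviation mate :: "'v \<Rightarrow> 'v set" where
  "mate v \<equiv> medge top_matching v"

lemma mate_mem:
  assumes "f \<in> inc E v" "0 < x f"
  shows "mate v \<in> top_matching" and "mate v \<in> inc E v"
proof -
  obtain e where "e \<in> top_matching" "v \<in> e"
    using top_matching_covers[OF assms(2)] assms(1) by (auto simp: mem_inc_iff)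
  moreover have "card (inc top_matching v) \<le> 1" using matching_top_matching
    by (simp add: matching_def)
  ultimately have "mate v = e" using medge_eqI[OF finite_top_matching] by blast
  thus "mate v \<in> top_matching" "mate v \<in> inc E v"
    using \<open>e \<in> top_matching\<close> \<open>v \<in> e\<close> top_matching_subset by (auto simp: mem_inc_iff)
qed

lemma better_sum_mate_lt_one:
  assumes "g \<in> top_matching" "b \<in> g"
  shows "sum x (B b g) < 1"
proof -
  have g: "0 < x g" "g \<in> inc E b" using assms top_matching_positive positive_inc by blast+
  have "sum x (B b g) + x g = sum x (insert g (B b g))"
    using finite_B by (simp add: mem_B strict_pref_def)
  also have "\<dots> \<le> sum x (inc E b)"
    using g(2) B_subset x_nonneg by (intro sum_mono2[OF finite_inc]) auto
  also have "\<dots> = 1" using vertex_sum_one[OF g(1) assms(2)] .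
  finally show ?thesis using g(1) by simp
qed

lemma sum_zero_above_mate_V1:
  assumes "a \<in> V1" "F \<subseteq> inc E a" "\<And>f. f \<in> F \<Longrightarrow> 0 < x f \<Longrightarrow> strict_pref pref a f (mate a)"
  shows "sum x F = 0"
proof (rule sum_eq_zero_if_no_positive[OF x_nonneg], rule notI)
  fix f assume f: "f \<in> F" "0 < x f"
  hence "f \<in> inc E a" using assms(2) by blast
  hence "pref a (mate a) f"
    using top_matching_best_at_V1[OF mate_mem(1) _ assms(1)] mate_mem(2) f(2)
    by (simp add: mem_inc_iff)
  thus False using assms(3)[OF f] by (simp add: strict_pref_def)
qed

lemma sum_lt_one_above_mate_V2:
  assumes "b \<in> V2" "F \<subseteq> inc E b" "\<And>f. f \<in> F \<Longrightarrow> 0 < x f \<Longrightarrow> strict_pref pref b f (mate b)"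
  shows "sum x F < 1"
proof (cases "\<exists>f\<in>F. 0 < x f")
  case True
  then obtain f where "f \<in> F" "0 < x f" by blast
  hence g: "mate b \<in> top_matching" "mate b \<in> inc E b" using assms(2) mate_mem by blast+
  have "sum x F \<le> sum x (B b (mate b))"
    using assms(2,3) order_trans[OF assms(2) inc_subset] B_subset_E
    by (intro sum_le_if_positive_subset[OF x_nonneg]) (auto simp: mem_B)
  also have "\<dots> < 1" using better_sum_mate_lt_one g by (simp add: mem_inc_iff)
  finally show ?thesis .
next
  case False
  thus ?thesis using sum_eq_zero_if_no_positive[OF x_nonneg] by simp
qed

lemma better_sum_zero_V1:
  assumes "a \<in> V1" "e \<in> inc E a" "pref a e (mate a)"
  shows "sum x (B a e) = 0"
proof (rule sum_zero_above_mate_V1[OF assms(1) B_subset])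
  fix f assume "f \<in> B a e" "0 < x f"
  thus "strict_pref pref a f (mate a)"
    using assms(2,3) mate_mem(2)[of f a] strict_pref_pref_trans[of "mate a" a f e]
    by (simp add: mem_B)
qed

lemma better_sum_lt_one_V2:
  assumes "b \<in> V2" "e \<in> inc E b" "pref b e (mate b)"
  shows "sum x (B b e) < 1"
proof (rule sum_lt_one_above_mate_V2[OF assms(1) B_subset])
  fix f assume "f \<in> B b e" "0 < x f"
  thus "strict_pref pref b f (mate b)"
    using assms(2,3) mate_mem(2)[of f b] strict_pref_pref_trans[of "mate b" b f e]
    by (simp add: mem_B)
qed

lemma not_weakly_blocked_E1:
  assumes "e \<in> E1" "e \<notin> top_matching"
  shows "\<not> weakly_blocks pref top_matching e"
proof
  assume blocks: "weakly_blocks pref top_matching e"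
  obtain a b where ab: "a \<in> V1" "b \<in> V2" "e = {a, b}" "a \<noteq> b"
    using assms(1) E1_subset by (blast elim: edgeE)
  have inc: "e \<in> inc E a" "e \<in> inc E b" using ab assms(1) E1_subset by (auto simp: mem_inc_iff)
  have pa: "pref a e (mate a)" and pb: "pref b e (mate b)"
    using blocks ab by (auto simp: weakly_blocks_def)
  have "x e = 0"
  proof (rule ccontr)
    assume "x e \<noteq> 0"
    hence pos: "0 < x e" using x_nonneg order.not_eq_order_implies_strict by metis
    have m: "mate a \<in> top_matching" "mate a \<in> inc E a" using mate_mem[OF inc(1) pos] by blast+
    have "pref a (mate a) e"
      using top_matching_best_at_V1[OF m(1) _ ab(1) inc(1) pos] m(2) by (simp add: mem_inc_iff)
    hence "e = mate a"
      using tied_positive_eq[OF top_matching_positive[OF m(1)] pos _ inc(1)] m(2) pa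
      by (simp add: indiff_def mem_inc_iff)
    thus False using m(1) assms(2) by simp
  qed
  moreover have "sum x (B a e) = 0" by (rule better_sum_zero_V1[OF ab(1) inc(1) pa])
  moreover have "sum x (B b e) < 1" by (rule better_sum_lt_one_V2[OF ab(2) inc(2) pb])
  ultimately show False using relaxation_E1[OF x_relaxation assms(1)] ab(3,4) by simp
qed

lemma not_strongly_blocked_E2:
  assumes "e \<in> E2" "e \<notin> top_matching"
  shows "\<not> strongly_blocks pref top_matching e"
proof
  assume blocks: "strongly_blocks pref top_matching e"
  obtain a b where ab: "a \<in> V1" "b \<in> V2" "e = {a, b}" "a \<noteq> b"
    using assms(1) E2_subset by (blast elim: edgeE)
  have inc: "e \<in> inc E a" "e \<in> inc E b" using ab assms(1) E2_subset by (auto simp: mem_inc_iff)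
  have pa: "pref a e (mate a)" and pb: "pref b e (mate b)"
    using blocks ab by (auto simp: strongly_blocks_def weakly_blocks_def)
  obtain w where w: "w \<in> e" "strict_pref pref w e (mate w)"
    using blocks by (auto simp: strongly_blocks_def)
  have Ba: "sum x (B a e) = 0" by (rule better_sum_zero_V1[OF ab(1) inc(1) pa])
  show False
  proof (cases "w = a")
    case True
    have "sum x (Q a e) = 0"
    proof (rule sum_zero_above_mate_V1[OF ab(1) Q_subset])
      fix f assume "f \<in> Q a e" "0 < x f"
      thus "strict_pref pref a f (mate a)"
        using w True inc(1) mate_mem(2)[of f a] pref_strict_pref_trans[of "mate a" a f e]
        by (simp add: mem_Q indiff_def)
    qed
    moreover have "sum x (B b e) < 1" by (rule better_sum_lt_one_V2[OF ab(2) inc(2) pb])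
    ultimately show False using relaxation_E2[OF x_relaxation assms(1), of a] Ba ab by simp
  next
    case False
    hence "w = b" using w(1) ab(3) by blast
    have "sum x (Q b e \<union> B b e) < 1"
    proof (rule sum_lt_one_above_mate_V2[OF ab(2)])
      show "Q b e \<union> B b e \<subseteq> inc E b" using Q_subset B_subset by blast
      fix f assume f: "f \<in> Q b e \<union> B b e" "0 < x f"
      hence "f \<in> inc E b" "pref b f e" by (auto simp: mem_Q mem_B indiff_def strict_pref_def)
      thus "strict_pref pref b f (mate b)"
        using w \<open>w = b\<close> inc(2) mate_mem(2)[of f b] f(2) pref_strict_pref_trans[of "mate b" b f e]
        by simp
    qed
    hence "sum x (Q b e) + sum x (B b e) < 1"
      using B_Q_disjoint finite_B finite_Q by (simp add: sum.union_disjoint Int_commute)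
    thus False using relaxation_E2[OF x_relaxation assms(1), of b] Ba ab by simp
  qed
qed

lemma nu_stable_top_matching: "nu_stable E E1 E2 pref top_matching"
  using matching_top_matching not_weakly_blocked_E1 not_strongly_blocked_E2
  by (simp add: nu_stable_def)

lemma char_vec_if_all_one:
  assumes "\<forall>e\<in>top_matching. x e = 1"
  shows "x = char_vec top_matching"
proof (rule ext)
  fix e
  have "x e = 0" if "e \<notin> top_matching"
  proof (rule ccontr)
    assume "x e \<noteq> 0"
    hence pos: "0 < x e" using x_nonneg order.not_eq_order_implies_strict by metis
    then obtain a where "a \<in> e" using positive_in_E by (blast elim: edgeE)
    hence inc: "e \<in> inc E a" using pos positive_inc by blast
    have m: "mate a \<in> top_matching" "mate a \<in> inc E a" using mate_mem[OF inc pos] by blast+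
    have "mate a \<noteq> e" using m(1) that by blast
    hence "x (mate a) + x e = sum x {mate a, e}" by simp
    also have "\<dots> \<le> sum x (inc E a)" using m(2) inc x_nonneg by (intro sum_mono2[OF finite_inc]) auto
    also have "\<dots> = 1" using vertex_sum_one[OF pos \<open>a \<in> e\<close>] .
    finally show False using assms m(1) pos by simp
  qed
  thus "x e = char_vec top_matching e" using assms by (auto simp: char_vec_def)
qed

lemma card_top_matching_inc: "F \<subseteq> inc E v \<Longrightarrow> card (F \<inter> top_matching) \<le> 1"
proof -
  assume "F \<subseteq> inc E v"
  hence "F \<inter> top_matching \<subseteq> inc top_matching v" by (auto simp: mem_inc_iff)
  hence "card (F \<inter> top_matching) \<le> card (inc top_matching v)"
    using finite_subset[OF inc_subset finite_top_matching] by (rule card_mono[rotated])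
  moreover have "card (inc top_matching v) \<le> 1" using matching_top_matching
    by (simp add: matching_def)
  ultimately show ?thesis by linarith
qed

lemma card_top_matching_inc_disjoint:
  assumes "F \<subseteq> inc E v" "G \<subseteq> inc E v" "F \<inter> G = {}"
  shows "card (F \<inter> top_matching) + card (G \<inter> top_matching) \<le> 1"
proof -
  have "card (F \<inter> top_matching) + card (G \<inter> top_matching) = card ((F \<union> G) \<inter> top_matching)"
    using assms(3) finite_top_matching by (simp add: Int_Un_distrib2 card_Un_disjoint disjoint_iff)
  also have "\<dots> \<le> 1" using assms(1,2) by (intro card_top_matching_inc) blast
  finally show ?thesis .
qed

lemma sum_ge_one_above_mate_V2:
  assumes "b \<in> V2" "g \<in> top_matching" "b \<in> g" "F \<subseteq> E"
    and "\<And>f. f \<in> inc E b \<Longrightarrow> pref b f g \<Longrightarrow> f \<in> F"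
  shows "1 \<le> sum x F"
proof -
  have "1 = sum x (inc E b)" using vertex_sum_one[OF top_matching_positive assms(3)] assms(2)
    by simp
  also have "\<dots> \<le> sum x F"
    using assms(4) top_matching_worst_at_V2[OF assms(2,3,1)] assms(5)
    by (intro sum_le_if_positive_subset[OF x_nonneg inc_subset]) auto
  finally show ?thesis .
qed

section \<open>Peeling off the top matching\<close>

definition min_weight :: real where
  "min_weight = Min (x ` top_matching)"

definition residual :: "'v set \<Rightarrow> real" where
  "residual e = (x e - min_weight * char_vec top_matching e) / (1 - min_weight)"

lemma min_weight_le: "e \<in> top_matching \<Longrightarrow> min_weight \<le> x e"
  unfolding min_weight_def using finite_top_matching by (intro Min_le) auto

context
  assumes top_matching_nonempty: "top_matching \<noteq> {}"
    and min_weight_lt_one: "min_weight < 1"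
begin

lemma min_weight_attained:
  obtains e where "e \<in> top_matching" "x e = min_weight"
proof -
  have "min_weight \<in> x ` top_matching"
    unfolding min_weight_def using finite_top_matching top_matching_nonempty by (intro Min_in) auto
  then obtain e where "e \<in> top_matching" "min_weight = x e" by blast
  thus thesis using that by simp
qed

lemma min_weight_pos: "0 < min_weight"
proof -
  obtain e where "e \<in> top_matching" "x e = min_weight" by (rule min_weight_attained)
  thus ?thesis using top_matching_positive by force
qed

lemma residual_nonneg: "0 \<le> residual e"
  unfolding residual_def using min_weight_le[of e] min_weight_lt_one x_nonneg[of e]
  by (intro divide_nonneg_pos) (auto simp: char_vec_def)

lemma residual_sum_nonneg: "0 \<le> sum residual F"
  by (simp add: sum_nonneg residual_nonneg)

lemma sum_residual:
  assumes "F \<subseteq> E"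
  shows "sum residual F = (sum x F - min_weight * card (F \<inter> top_matching)) / (1 - min_weight)"
proof -
  have "sum residual F = (sum x F - min_weight * sum (char_vec top_matching) F) / (1 - min_weight)"
    by (simp add: residual_def sum_divide_distrib[symmetric] sum_subtractf sum_distrib_left)
  thus ?thesis using finite_subset[OF assms finite_E] by (simp add: sum_char_vec)
qed

lemma residual_covering:
  assumes "F \<subseteq> E" "G \<subseteq> E" "H \<subseteq> E" "1 \<le> sum x F + sum x G + sum x H"
    and "card (F \<inter> top_matching) + card (G \<inter> top_matching) + card (H \<inter> top_matching) \<le> 1"
  shows "1 \<le> sum residual F + sum residual G + sum residual H"
proof -
  let ?c = "real (card (F \<inter> top_matching) + card (G \<inter> top_matching) + card (H \<inter> top_matching))"
  have "min_weight * ?c \<le> min_weight" using assms(5) min_weight_pos by (simp add: mult_left_le)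
  hence "1 - min_weight \<le> sum x F + sum x G + sum x H - min_weight * ?c" using assms(4) by simp
  thus ?thesis
    using min_weight_lt_one
    by (simp add: sum_residual assms(1-3) le_divide_eq add_divide_distrib[symmetric] algebra_simps)
qed

lemma residual_B_V2:
  assumes "b \<in> V2" "e \<in> inc E b" "B b e \<inter> top_matching \<noteq> {}"
  shows "1 \<le> sum residual (B b e)"
proof -
  obtain g where g: "g \<in> B b e" "g \<in> top_matching" using assms(3) by blast
  have "1 \<le> sum x (B b e)"
  proof (rule sum_ge_one_above_mate_V2[OF assms(1) g(2) _ B_subset_E])
    show "b \<in> g" using g(1) by (simp add: mem_B mem_inc_iff)
    fix f assume "f \<in> inc E b" "pref b f g"
    thus "f \<in> B b e" using g(1) assms(2) pref_strict_pref_trans[of e b f g] by (simp add: mem_B)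
  qed
  moreover have "card (B b e \<inter> top_matching) \<le> 1" by (rule card_top_matching_inc[OF B_subset])
  ultimately show ?thesis using residual_covering[of "{}" "{}" "B b e"] B_subset_E by simp
qed

lemma residual_tie_V2:
  assumes "b \<in> V2" "e \<in> inc E b" "Q b e \<inter> top_matching \<noteq> {}" "B b e \<inter> top_matching = {}"
  shows "1 \<le> sum residual (Q b e) + sum residual (B b e)"
proof -
  \<comment> \<open>the mate of \<open>b\<close> is tied with \<open>e\<close>, so all of \<open>b\<close>'s weight sits on edges \<open>b\<close>
    weakly prefers to \<open>e\<close>\<close>
  obtain g where g: "g \<in> Q b e" "g \<in> top_matching" using assms(3) by blast
  have "1 \<le> sum x (Q b e \<union> B b e)"
  proof (rule sum_ge_one_above_mate_V2[OF assms(1) g(2)])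
    show "b \<in> g" "Q b e \<union> B b e \<subseteq> E" using g(1) Q_subset_E B_subset_E
      by (auto simp: mem_Q mem_inc_iff)
    fix f assume "f \<in> inc E b" "pref b f g"
    hence "pref b f e" using g(1) assms(2) pref_trans[of f b g e] by (simp add: mem_Q indiff_def)
    thus "f \<in> Q b e \<union> B b e"
      using \<open>f \<in> inc E b\<close> by (auto simp: mem_Q mem_B indiff_def strict_pref_def)
  qed
  hence "1 \<le> sum x (Q b e) + sum x {} + sum x (B b e)"
    using B_Q_disjoint finite_B finite_Q by (simp add: sum.union_disjoint Int_commute)
  hence "1 \<le> sum residual (Q b e) + sum residual {} + sum residual (B b e)"
    using card_top_matching_inc[OF Q_subset] assms(4) Q_subset_E B_subset_E
    by (intro residual_covering) auto
  thus ?thesis by simp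
qed

lemma residual_E1:
  assumes "e \<in> E1"
  shows "1 \<le> residual e + (\<Sum>v\<in>e. sum residual (B v e))"
proof -
  obtain a b where ab: "a \<in> V1" "b \<in> V2" "e = {a, b}" "a \<noteq> b"
    using assms E1_subset by (blast elim: edgeE)
  have inc: "e \<in> inc E a" "e \<in> inc E b" using ab assms E1_subset by (auto simp: mem_inc_iff)
  have split: "(\<Sum>v\<in>e. sum residual (B v e)) = sum residual (B a e) + sum residual (B b e)"
    using ab(3,4) by simp
  show ?thesis
  proof (cases "B b e \<inter> top_matching = {}")
    case False
    thus ?thesis
      using residual_B_V2[OF ab(2) inc(2)] split residual_sum_nonneg[of "B a e"] residual_nonneg[of e]
      by linarith
  next
    case True
    have "card ({e} \<inter> top_matching) + card (B a e \<inter> top_matching) \<le> 1"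
      using inc(1) B_subset
      by (intro card_top_matching_inc_disjoint) (auto simp: mem_B strict_pref_def)
    moreover have "1 \<le> sum x {e} + sum x (B a e) + sum x (B b e)"
      using relaxation_E1[OF x_relaxation assms] ab(3,4) by simp
    ultimately have "1 \<le> sum residual {e} + sum residual (B a e) + sum residual (B b e)"
      using True assms E1_subset B_subset_E by (intro residual_covering) auto
    thus ?thesis using split by simp
  qed
qed

lemma residual_E2:
  assumes "e \<in> E2" "v \<in> e"
  shows "1 \<le> sum residual (Q v e) + (\<Sum>w\<in>e. sum residual (B w e))"
proof -
  obtain a b where ab: "a \<in> V1" "b \<in> V2" "e = {a, b}" "a \<noteq> b"
    using assms E2_subset by (blast elim: edgeE)
  have inc: "e \<in> inc E a" "e \<in> inc E b" using ab assms E2_subset by (auto simp: mem_inc_iff)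
  have split: "(\<Sum>w\<in>e. sum residual (B w e)) = sum residual (B a e) + sum residual (B b e)"
    using ab(3,4) by simp
  show ?thesis
  proof (cases "B b e \<inter> top_matching = {}")
    case False
    thus ?thesis
      using residual_B_V2[OF ab(2) inc(2)] split residual_sum_nonneg[of "B a e"]
        residual_sum_nonneg[of "Q v e"]
      by linarith
  next
    case no_B: True
    have "1 \<le> sum x (Q v e) + sum x (B a e) + sum x (B b e)"
      using relaxation_E2[OF x_relaxation assms] ab(3,4) by simp
    hence covering: "1 \<le> sum residual (Q v e) + sum residual (B a e) + sum residual (B b e)"
      if "card (Q v e \<inter> top_matching) + card (B a e \<inter> top_matching) \<le> 1"
      using that no_B Q_subset_E B_subset_E by (intro residual_covering) auto
    consider "v = a" | "v = b" "Q b e \<inter> top_matching = {} \<or> B a e \<inter> top_matching = {}"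
      | "v = b" "Q b e \<inter> top_matching \<noteq> {}"
      using assms(2) ab(3) by blast
    thus ?thesis
    proof cases
      case 1
      have "Q a e \<inter> B a e = {}" using B_Q_disjoint by blast
      hence "card (Q a e \<inter> top_matching) + card (B a e \<inter> top_matching) \<le> 1"
        by (rule card_top_matching_inc_disjoint[OF Q_subset B_subset])
      thus ?thesis using covering split 1 by simp
    next
      case 2
      hence "card (Q v e \<inter> top_matching) + card (B a e \<inter> top_matching) \<le> 1"
        using card_top_matching_inc[OF Q_subset] card_top_matching_inc[OF B_subset] by auto
      thus ?thesis using covering split by simp
    next
      case 3
      hence "1 \<le> sum residual (Q b e) + sum residual (B b e)"
        using residual_tie_V2[OF ab(2) inc(2) _ no_B] by blast
      thus ?thesis using 3(1) split residual_sum_nonneg[of "B a e"] by simp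
    qed
  qed
qed

lemma residual_vertex:
  assumes "v \<in> V"
  shows "sum residual (inc E v) \<le> 1"
proof (cases "\<exists>f\<in>inc E v. 0 < x f")
  case True
  then obtain f where f: "f \<in> inc E v" "0 < x f" by blast
  have "sum x (inc E v) = 1" using vertex_sum_one[OF f(2)] f(1) by (simp add: mem_inc_iff)
  moreover have "card (inc E v \<inter> top_matching) = 1"
  proof -
    have "mate v \<in> inc E v \<inter> top_matching" using mate_mem[OF f] by blast
    moreover have "finite (inc E v \<inter> top_matching)" using finite_top_matching by simp
    ultimately have "card (inc E v \<inter> top_matching) \<noteq> 0" by (auto simp: card_eq_0_iff)
    thus ?thesis using card_top_matching_inc[of "inc E v" v] by simp
  qed
  ultimately show ?thesis using min_weight_lt_one by (simp add: sum_residual inc_subset)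
next
  case False
  hence "inc E v \<inter> top_matching = {}" using top_matching_positive by blast
  moreover have "sum x (inc E v) = 0"
    by (rule sum_eq_zero_if_no_positive[OF x_nonneg]) (use False in blast)
  ultimately show ?thesis by (simp add: sum_residual inc_subset)
qed

lemma residual_in_relaxation: "residual \<in> relaxation"
  unfolding relaxation_def
proof (intro CollectI conjI ballI allI impI)
  fix e assume "e \<notin> E"
  thus "residual e = 0"
    using relaxation_zero[OF x_relaxation] top_matching_subset
    by (auto simp: residual_def char_vec_def)
next
  fix e show "0 \<le> residual e" by (rule residual_nonneg)
next
  fix v assume "v \<in> V" thus "sum residual (inc E v) \<le> 1" by (rule residual_vertex)
next
  fix e assume "e \<in> E1" thus "1 \<le> residual e + (\<Sum>v\<in>e. sum residual (B v e))" by (rule residual_E1)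
next
  fix e v assume "e \<in> E2" "v \<in> e"
  thus "1 \<le> sum residual (Q v e) + (\<Sum>w\<in>e. sum residual (B w e))" by (rule residual_E2)
qed

lemma card_support_residual: "card (support residual) < card (support x)"
proof -
  obtain e0 where e0: "e0 \<in> top_matching" "x e0 = min_weight" by (rule min_weight_attained)
  have "support residual \<subseteq> support x - {e0}"
  proof
    fix e assume "e \<in> support residual"
    hence "e \<in> E" "0 < x e - min_weight * char_vec top_matching e"
      using min_weight_lt_one by (auto simp: support_def residual_def zero_less_divide_iff)
    thus "e \<in> support x - {e0}"
      using e0 min_weight_pos by (auto simp: support_def char_vec_def split: if_splits)
  qed
  moreover have "e0 \<in> support x" using e0(1) top_matching_positive top_matching_subset
    by (auto simp: support_def)
  ultimately have "support residual \<subset> support x" by blast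
  thus ?thesis using finite_support by (rule psubset_card_mono[rotated])
qed

lemma convex_comb_residual:
  "x = (\<lambda>e. min_weight * char_vec top_matching e + (1 - min_weight) * residual e)"
  using min_weight_lt_one by (simp add: residual_def)

end

lemma stable_decomposition:
  "x = char_vec top_matching \<or>
   (\<exists>y \<mu>. y \<in> relaxation \<and> card (support y) < card (support x) \<and> 0 \<le> \<mu> \<and> \<mu> \<le> 1 \<and>
          x = (\<lambda>e. \<mu> * char_vec top_matching e + (1 - \<mu>) * y e))"
proof (cases "\<forall>e\<in>top_matching. x e = 1")
  case True
  thus ?thesis using char_vec_if_all_one by blast
next
  case False
  then obtain e1 where e1: "e1 \<in> top_matching" "x e1 \<noteq> 1" by blast
  obtain a where "a \<in> e1" using e1(1) top_matching_subset by (blast elim: edgeE)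
  hence "x e1 \<le> sum x (inc E a)"
    using e1(1) top_matching_subset x_nonneg
    by (intro member_le_sum[OF _ _ finite_inc]) (auto simp: mem_inc_iff)
  also have "\<dots> = 1" using vertex_sum_one top_matching_positive e1(1) \<open>a \<in> e1\<close> by blast
  finally have "min_weight < 1" using min_weight_le[OF e1(1)] e1(2) by linarith
  moreover have "top_matching \<noteq> {}" using e1(1) by blast
  ultimately show ?thesis
    using min_weight_pos residual_in_relaxation card_support_residual convex_comb_residual
    by (intro disjI2 exI[of _ residual] exI[of _ min_weight]) (simp add: less_imp_le)
qed

end

context nu_setting
begin

lemma relaxation_subset_conv_hull:
  "x \<in> relaxation \<Longrightarrow> x \<in> conv_hull {char_vec M | M. nu_stable E E1 E2 pref M}"
proof (induction "card (support x)" arbitrary: x rule: less_induct)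
  case less
  let ?P = "conv_hull {char_vec M | M. nu_stable E E1 E2 pref M}"
  have IH: "y \<in> ?P" if "y \<in> relaxation" "card (support y) < card (support x)" for y
    using less.hyps that by blast
  show ?case
  proof (cases "\<exists>d. admissible_direction x d")
    case True
    then obtain d where "admissible_direction x d" by blast
    then obtain y z \<mu> where yz: "y \<in> relaxation" "z \<in> relaxation"
      "card (support y) < card (support x)" "card (support z) < card (support x)"
      and \<mu>: "0 \<le> \<mu>" "\<mu> \<le> 1" and x: "x = (\<lambda>e. \<mu> * y e + (1 - \<mu>) * z e)"
      by (rule split_along_admissible_direction[OF less.prems])
    show ?thesis unfolding x using IH[OF yz(1,3)] IH[OF yz(2,4)] \<mu> by (rule conv_hull_convex_comb)
  next
    case False
    interpret unique_support V1 V2 E E1 E2 pref x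
      using less.prems unique_positive_in_tie_class[OF less.prems False] by unfold_locales
    have stable: "char_vec top_matching \<in> ?P"
      using nu_stable_top_matching by (intro conv_hull_superset) blast
    show ?thesis
    proof (cases "x = char_vec top_matching")
      case True
      from stable show ?thesis by (simp only: True[symmetric])
    next
      case False
      then obtain y \<mu> where y: "y \<in> relaxation" "card (support y) < card (support x)"
        and \<mu>: "0 \<le> \<mu>" "\<mu> \<le> 1" and x: "x = (\<lambda>e. \<mu> * char_vec top_matching e + (1 - \<mu>) * y e)"
        using stable_decomposition by blast
      have "(\<lambda>e. \<mu> * char_vec top_matching e + (1 - \<mu>) * y e) \<in> ?P"
        using stable IH[OF y] \<mu> by (rule conv_hull_convex_comb)
      thus ?thesis by (simp only: x[symmetric])
    qed
  qed
qed

end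

theorem theorem4p1:
  fixes V1 V2 :: "'v set" and E E1 E2 :: "'v set set"
    and pref :: "'v \<Rightarrow> 'v set \<Rightarrow> 'v set \<Rightarrow> bool"
  assumes "setting V1 V2 E E1 E2 pref"
  shows "conv_hull {char_vec M | M. nu_stable E E1 E2 pref M} =
    {x :: 'v set \<Rightarrow> real.
       (\<forall>e. e \<notin> E \<longrightarrow> x e = 0) \<and> (\<forall>e\<in>E. 0 \<le> x e) \<and>
       (\<forall>v \<in> V1 \<union> V2. sum x (inc E v) \<le> 1) \<and>
       (\<forall>e \<in> E1. x e + (\<Sum>v\<in>e. sum x (better E pref v e)) \<ge> 1) \<and>
       (\<forall>e \<in> E2. \<forall>v\<in>e. sum x (equiv_edges E pref v e) + (\<Sum>w\<in>e. sum x (better E pref w e)) \<ge> 1)}"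
proof -
  interpret nu_setting V1 V2 E E1 E2 pref by (rule nu_setting.intro[OF assms])
  have "conv_hull {char_vec M | M. nu_stable E E1 E2 pref M} = relaxation"
    using conv_hull_subset_relaxation relaxation_subset_conv_hull by blast
  thus ?thesis unfolding relaxation_def .
qed

end
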